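(* Assume Assumptions 1, 2 and 3 hold and that the propensity score models $e_X(X;\alpha)$ and $e_W(X,W;\alpha,\gamma)$ are correctly specified. Then $$\Sigma^{\mathrm{eps}}_W(\delta^{\mathrm{eps}})\le\Sigma^{\mathrm{eps}}_X(\beta^{\mathrm{eps}})\le\Sigma^{\mathrm{fps}}_X(\beta^{\mathrm{fps}}),\qquad \Sigma^{\mathrm{eps}}_W(\delta^{\mathrm{eps}})\le\Sigma^{\mathrm{fps}}_W(\delta^{\mathrm{fps}})\le\Sigma^{\mathrm{fps}}_X(\beta^{\mathrm{fps}}).$$
   Context: Data: i.i.d. copies of $(Y,Z,X,W)$, binary $Z$, $Y=ZY_1+(1-Z)Y_0$, $\tau=E(Y_1-Y_0)$. Assumption 1: $Z\perp(Y_0,Y_1)\mid X$, $0<\Pr(Z=1\mid X)<1$. Assumption 2: $Z\perp(W,Y_0,Y_1)\mid X$. $e_0(X)=\Pr(Z=1\mid X)$. Propensity models $e_X(X;\alpha)$ and $e_W(X,W;\alpha,\gamma)$ with $e_W(X,W;\alpha,0)=e_X(X;\alpha)$; correct specification means $e_X(X;\alpha_0)=e_0(X)$, and then $e_W(X,W;\alpha_0,\gamma_0)=e_0(X)$ with $\gamma_0=0$. Scores: $S_\alpha(X,Z;\alpha)$ is the $\alpha$-score of $Z\log e_X+(1-Z)\log(1-e_X)$; $S_\alpha(X,W,Z;\alpha,\gamma)$, $S_\gamma(X,W,Z;\alpha,\gamma)$ are the $\alpha$- and $\gamma$-scores of $Z\log e_W+(1-Z)\log(1-e_W)$. Outcome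 working models $Q_X(X,z;\beta)$ and $Q_W(X,W,z;\delta)$. Assumption 3: either (i) for each $\beta$, $\delta=(\beta^T,0^T)^T$ satisfies $Q_W(X,W,z;\delta)=Q_X(X,z;\beta)$; or (ii) $Q_W(X,W,z;\delta_0)=E(Y\mid X,W,Z=z)$ for some $\delta_0$. Define $\varphi_X(Y,X,Z;\alpha,\beta)=\frac{ZY}{e_X}-\frac{(1-Z)Y}{1-e_X}-\frac{Z-e_X}{e_X}Q_X(X,1;\beta)+\frac{e_X-Z}{1-e_X}Q_X(X,0;\beta)-\tau$ with $e_X=e_X(X;\alpha)$, and $\varphi_W(Y,X,W,Z;\alpha,\gamma,\delta)$ likewise with $e_W(X,W;\alpha,\gamma)$ and $Q_W(X,W,z;\delta)$. Let $\mathcal H_{\alpha\alpha,0}=E(S_\alpha S_\alpha^T)$ at $\alpha_0$, $\mathcal D_X(\beta)=-E\{\partial\varphi_X(\cdot;\alpha_0,\beta)/\partial\alpha^T\}$; $\mathcal H_{W,0}=E\{(S_\alpha^T,S_\gamma^T)^T(S_\alpha^T,S_\gamma^T)\}$ at $(\alpha_0,\gamma_0)$, $\mathcal D_W(\delta)=-E\{\partial\varphi_W(\cdot;\alpha_0,\gamma_0,\delta)/\partial(\alpha^T,\gamma^T)\}$. Asymptotic variances: $\Sigma^{\mathrm{fps}}_X(\beta)=\mathrm{var}\{\varphi_X(\cdot;\alpha_0,\beta)\}$, $\Sigma^{\mathrm{eps}}_X(\beta)=\mathrm{var}\{\varphi_X(\cdot;\alpha_0,\beta)-\mathcal D_X(\beta)\mathcal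 H_{\alpha\alpha,0}^{-1}S_\alpha(X,Z;\alpha_0)\}$, $\Sigma^{\mathrm{fps}}_W(\delta)=\mathrm{var}\{\varphi_W(\cdot;\alpha_0,\gamma_0,\delta)\}$, $\Sigma^{\mathrm{eps}}_W(\delta)=\mathrm{var}\{\varphi_W(\cdot;\alpha_0,\gamma_0,\delta)-\mathcal D_W(\delta)\mathcal H_{W,0}^{-1}(S_\alpha^T,S_\gamma^T)^T\}$ (doubly robust estimators with known, resp. maximum-likelihood-estimated, propensity scores). $\beta^{\mathrm{fps}},\beta^{\mathrm{eps}},\delta^{\mathrm{fps}},\delta^{\mathrm{eps}}$ denote the minimizers of $\Sigma^{\mathrm{fps}}_X,\Sigma^{\mathrm{eps}}_X,\Sigma^{\mathrm{fps}}_W,\Sigma^{\mathrm{eps}}_W$, respectively. *)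

theory Defs
  imports "HOL-Probability.Probability"
begin

(* Gradient of a real-valued function on a Euclidean parameter space:
   the vector g with  f'(x) h = g \<bullet> h  (meaningful where f is differentiable). *)
definition gradient :: "('p::euclidean_space \<Rightarrow> real) \<Rightarrow> 'p \<Rightarrow> 'p" where
  "gradient f x = (SOME g. (f has_derivative (\<lambda>h. g \<bullet> h)) (at x))"

definition var_rv :: "'a measure \<Rightarrow> ('a \<Rightarrow> real) \<Rightarrow> real" where
  "var_rv M f = (\<integral>\<omega>. (f \<omega> - (\<integral>\<nu>. f \<nu> \<partial>M))\<^sup>2 \<partial>M)"

definition cond_exp_given :: "'a measure \<Rightarrow> ('a \<Rightarrow> 'b) \<Rightarrow> 'b measure \<Rightarrow> ('a \<Rightarrow> real) \<Rightarrow> 'a \<Rightarrow> real" where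
  "cond_exp_given M V N f = real_cond_exp M (vimage_algebra (space M) V N) f"

definition cond_indep :: "'a measure \<Rightarrow> ('a \<Rightarrow> 'b) \<Rightarrow> 'b measure \<Rightarrow> ('a \<Rightarrow> 'c) \<Rightarrow> 'c measure
    \<Rightarrow> ('a \<Rightarrow> 'd) \<Rightarrow> 'd measure \<Rightarrow> bool" where
  "cond_indep M A MA B MB V MV \<longleftrightarrow>
     (\<forall>SA\<in>sets MA. \<forall>SB\<in>sets MB. AE \<omega> in M.
        cond_exp_given M V MV (\<lambda>\<nu>. indicator SA (A \<nu>) * indicator SB (B \<nu>)) \<omega>
        = cond_exp_given M V MV (\<lambda>\<nu>. indicator SA (A \<nu>)) \<omega>
          * cond_exp_given M V MV (\<lambda>\<nu>. indicator SB (B \<nu>)) \<omega>)"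

definition prop_score :: "'a measure \<Rightarrow> ('a \<Rightarrow> 'x) \<Rightarrow> 'x measure \<Rightarrow> ('a \<Rightarrow> real) \<Rightarrow> 'a \<Rightarrow> real" where
  "prop_score M X MX Z = cond_exp_given M X MX (\<lambda>\<nu>. indicator {1::real} (Z \<nu>))"

definition loglik :: "real \<Rightarrow> real \<Rightarrow> real" where
  "loglik e z = z * ln e + (1 - z) * ln (1 - e)"

(* doubly robust influence function with propensity e, outcome predictions q1, q0 *)
definition phi :: "real \<Rightarrow> real \<Rightarrow> real \<Rightarrow> real \<Rightarrow> real \<Rightarrow> real \<Rightarrow> real" where
  "phi e q1 q0 z y \<tau> = z * y / e - (1 - z) * y / (1 - e) - (z - e) / e * q1 + (e - z) / (1 - e) * q0 - \<tau>"

definition ll_X :: "('x \<Rightarrow> 'p \<Rightarrow> real) \<Rightarrow> ('a \<Rightarrow> 'x) \<Rightarrow> ('a \<Rightarrow> real) \<Rightarrow> 'p \<Rightarrow> 'a \<Rightarrow> real" where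
  "ll_X eX X Z a \<omega> = loglik (eX (X \<omega>) a) (Z \<omega>)"

definition ll_W :: "('x \<Rightarrow> 'w \<Rightarrow> 'p \<Rightarrow> 'q \<Rightarrow> real) \<Rightarrow> ('a \<Rightarrow> 'x) \<Rightarrow> ('a \<Rightarrow> 'w) \<Rightarrow> ('a \<Rightarrow> real)
    \<Rightarrow> 'p \<times> 'q \<Rightarrow> 'a \<Rightarrow> real" where
  "ll_W eW X W Z \<theta> \<omega> = loglik (eW (X \<omega>) (W \<omega>) (fst \<theta>) (snd \<theta>)) (Z \<omega>)"

definition ate :: "'a measure \<Rightarrow> ('a \<Rightarrow> real) \<Rightarrow> ('a \<Rightarrow> real) \<Rightarrow> real" where
  "ate M Y0 Y1 = (\<integral>\<nu>. Y1 \<nu> - Y0 \<nu> \<partial>M)"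

(* varphi_X(Y,X,Z; alpha, beta), as a function of alpha for fixed beta *)
definition phi_X :: "'a measure \<Rightarrow> ('x \<Rightarrow> 'p \<Rightarrow> real) \<Rightarrow> ('x \<Rightarrow> real \<Rightarrow> 'b \<Rightarrow> real)
    \<Rightarrow> ('a \<Rightarrow> 'x) \<Rightarrow> ('a \<Rightarrow> real) \<Rightarrow> ('a \<Rightarrow> real) \<Rightarrow> ('a \<Rightarrow> real) \<Rightarrow> ('a \<Rightarrow> real)
    \<Rightarrow> 'b \<Rightarrow> 'p \<Rightarrow> 'a \<Rightarrow> real" where
  "phi_X M eX QX X Z Y Y0 Y1 \<beta> a \<omega> =
     phi (eX (X \<omega>) a) (QX (X \<omega>) 1 \<beta>) (QX (X \<omega>) 0 \<beta>) (Z \<omega>) (Y \<omega>) (ate M Y0 Y1)"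

(* varphi_W(Y,X,W,Z; alpha, gamma, delta), as a function of theta = (alpha,gamma) for fixed delta *)
definition phi_W :: "'a measure \<Rightarrow> ('x \<Rightarrow> 'w \<Rightarrow> 'p \<Rightarrow> 'q \<Rightarrow> real) \<Rightarrow> ('x \<Rightarrow> 'w \<Rightarrow> real \<Rightarrow> 'd \<Rightarrow> real)
    \<Rightarrow> ('a \<Rightarrow> 'x) \<Rightarrow> ('a \<Rightarrow> 'w) \<Rightarrow> ('a \<Rightarrow> real) \<Rightarrow> ('a \<Rightarrow> real) \<Rightarrow> ('a \<Rightarrow> real) \<Rightarrow> ('a \<Rightarrow> real)
    \<Rightarrow> 'd \<Rightarrow> 'p \<times> 'q \<Rightarrow> 'a \<Rightarrow> real" where
  "phi_W M eW QW X W Z Y Y0 Y1 \<delta> \<theta> \<omega> =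
     phi (eW (X \<omega>) (W \<omega>) (fst \<theta>) (snd \<theta>)) (QW (X \<omega>) (W \<omega>) 1 \<delta>) (QW (X \<omega>) (W \<omega>) 0 \<delta>)
         (Z \<omega>) (Y \<omega>) (ate M Y0 Y1)"

definition score :: "('p::euclidean_space \<Rightarrow> 'a \<Rightarrow> real) \<Rightarrow> 'p \<Rightarrow> 'a \<Rightarrow> 'p" where
  "score l \<theta>0 \<omega> = gradient (\<lambda>\<theta>. l \<theta> \<omega>) \<theta>0"

(* Fisher information H = E(S S^T), as the linear operator v \<mapsto> E(S (S^T v)) *)
definition fisher_info :: "'a measure \<Rightarrow> ('p::euclidean_space \<Rightarrow> 'a \<Rightarrow> real) \<Rightarrow> 'p \<Rightarrow> 'p \<Rightarrow> 'p" where
  "fisher_info M l \<theta>0 v = (\<integral>\<omega>. (score l \<theta>0 \<omega> \<bullet> v) *\<^sub>R score l \<theta>0 \<omega> \<partial>M)"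

(* D = - E(d varphi / d theta^T) at theta0, as a vector *)
definition Dmat :: "'a measure \<Rightarrow> ('p::euclidean_space \<Rightarrow> 'a \<Rightarrow> real) \<Rightarrow> 'p \<Rightarrow> 'p" where
  "Dmat M \<phi> \<theta>0 = - (\<integral>\<omega>. gradient (\<lambda>\<theta>. \<phi> \<theta> \<omega>) \<theta>0 \<partial>M)"

(* asymptotic variance with fixed (known) propensity score *)
definition Sigma_fps :: "'a measure \<Rightarrow> ('p \<Rightarrow> 'a \<Rightarrow> real) \<Rightarrow> 'p \<Rightarrow> real" where
  "Sigma_fps M \<phi> \<theta>0 = var_rv M (\<phi> \<theta>0)"

(* asymptotic variance with ML-estimated propensity score:
   var{ varphi - D H^{-1} S } *)
definition Sigma_eps :: "'a measure \<Rightarrow> ('p::euclidean_space \<Rightarrow> 'a \<Rightarrow> real) \<Rightarrow> ('p \<Rightarrow> 'a \<Rightarrow> real) \<Rightarrow> 'p \<Rightarrow> real" where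
  "Sigma_eps M \<phi> l \<theta>0 =
     var_rv M (\<lambda>\<omega>. \<phi> \<theta>0 \<omega> - Dmat M \<phi> \<theta>0 \<bullet> inv (fisher_info M l \<theta>0) (score l \<theta>0 \<omega>))"

end

theory Submission
  imports Defs
begin

(* With a correctly specified propensity model three facts combine.
   (1) Maximum-likelihood estimation gives the information identity D = E(phi S), so D H^-1 S is
   the L2 projection of phi onto the span of the score S: the eps variance is a least-squares
   residual variance and never exceeds the fps variance.
   (2) Since Z is independent of W given X, E(Z - e(X) | X, W) = 0, so a term (Z - e(X)) G(X, W) is
   uncorrelated with the doubly robust function phi* built from E(Y | X, W, Z). Under Assumption
   3(ii) the W-model attains phi*, and every X-model function, score-adjusted or not, is phi* plus
   such a term.
   (3) Under Assumption 3(i) the W-model reproduces every X-model function, and projecting on the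
   larger score (S_alpha, S_gamma) can only lower the variance. *)

section \<open>Gradients\<close>

lemma gradient_eqI:
  fixes f :: "'p::euclidean_space \<Rightarrow> real"
  assumes "(f has_derivative (\<lambda>h. g \<bullet> h)) (at x)"
  shows "gradient f x = g"
proof -
  have "(f has_derivative (\<lambda>h. gradient f x \<bullet> h)) (at x)"
    unfolding gradient_def using assms by (rule someI)
  then have "(\<lambda>h. gradient f x \<bullet> h) = (\<lambda>h. g \<bullet> h)"
    using assms by (rule has_derivative_unique)
  then show ?thesis
    by (metis vector_eq_rdot)
qed

lemma gradient_has_derivative:
  fixes f :: "'p::euclidean_space \<Rightarrow> real"
  assumes "f differentiable (at x)"
  shows "(f has_derivative (\<lambda>h. gradient f x \<bullet> h)) (at x)"
proof -
  obtain f' where f': "(f has_derivative f') (at x)"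
    using assms by (auto simp: differentiable_def)
  then have "f' = (\<lambda>h. adjoint f' 1 \<bullet> h)"
    by (auto simp: adjoint_works has_derivative_linear inner_commute)
  with f' show ?thesis
    by (metis gradient_eqI)
qed

lemma has_derivative_real_comp_gradient:
  fixes f :: "'p::euclidean_space \<Rightarrow> real"
  assumes "(f has_derivative (\<lambda>h. g \<bullet> h)) (at x)"
    and "(\<phi> has_real_derivative d) (at (f x))"
  shows "((\<lambda>y. \<phi> (f y)) has_derivative (\<lambda>h. (d *\<^sub>R g) \<bullet> h)) (at x)"
  using has_derivative_compose[OF assms(1) assms(2)[unfolded has_field_derivative_def]]
  by (simp add: algebra_simps)

lemma gradient_Pair_zero:
  fixes f :: "'p::euclidean_space \<times> 'q::euclidean_space \<Rightarrow> real"
  assumes "f differentiable (at (a, 0))"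
  shows "gradient (\<lambda>a. f (a, 0)) a = fst (gradient f (a, 0))"
proof (rule gradient_eqI)
  have "((\<lambda>a. (a, 0::'q)) has_derivative (\<lambda>h. (h, 0))) (at a)"
    by (auto intro!: derivative_eq_intros)
  from has_derivative_compose[OF this gradient_has_derivative[OF assms]]
  show "((\<lambda>a. f (a, 0)) has_derivative (\<lambda>h. fst (gradient f (a, 0)) \<bullet> h)) (at a)"
    by (simp add: inner_Pair_0)
qed

lemma gradient_difference_quotient_LIMSEQ:
  fixes f :: "'p::euclidean_space \<Rightarrow> real"
  assumes "f differentiable (at a)"
  shows "(\<lambda>n. (f (a + inverse (real (Suc n)) *\<^sub>R b) - f a) * real (Suc n))
           \<longlonglongrightarrow> gradient f a \<bullet> b"
proof -
  have "((\<lambda>t::real. a + t *\<^sub>R b) has_derivative (\<lambda>t. t *\<^sub>R b)) (at 0)"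
    by (auto intro!: derivative_eq_intros)
  moreover have "(f has_derivative (\<lambda>h. gradient f a \<bullet> h)) (at (a + 0 *\<^sub>R b))"
    using gradient_has_derivative[OF assms] by simp
  ultimately have "((\<lambda>t. f (a + t *\<^sub>R b)) has_derivative (\<lambda>t. gradient f a \<bullet> (t *\<^sub>R b))) (at 0)"
    by (rule has_derivative_compose)
  then have "((\<lambda>t. f (a + t *\<^sub>R b)) has_real_derivative (gradient f a \<bullet> b)) (at 0)"
    by (simp add: has_field_derivative_def mult.commute[of _ "gradient f a \<bullet> b"])
  then have "((\<lambda>t. (f (a + t *\<^sub>R b) - f a) / t) \<longlongrightarrow> gradient f a \<bullet> b) (at 0)"
    by (simp add: DERIV_def)
  moreover have "filterlim (\<lambda>n. inverse (real (Suc n))) (at 0) sequentially"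
    by (rule filterlim_atI) (use LIMSEQ_inverse_real_of_nat in auto)
  ultimately show ?thesis
    using filterlim_compose by (fastforce simp: divide_inverse)
qed

lemma borel_measurable_gradient:
  fixes f :: "'x \<Rightarrow> 'p::euclidean_space \<Rightarrow> real"
  assumes "\<forall>x\<in>space N. f x differentiable (at a)"
    and "\<forall>a. (\<lambda>x. f x a) \<in> borel_measurable N"
  shows "(\<lambda>x. gradient (f x) a) \<in> borel_measurable N"
proof -
  have "(\<lambda>x. gradient (f x) a \<bullet> b) \<in> borel_measurable N" for b
  proof (rule borel_measurable_LIMSEQ_real)
    show "(\<lambda>n. (f x (a + inverse (real (Suc n)) *\<^sub>R b) - f x a) * real (Suc n))
           \<longlonglongrightarrow> gradient (f x) a \<bullet> b" if "x \<in> space N" for x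
      using assms(1) that by (blast intro: gradient_difference_quotient_LIMSEQ)
  qed (use assms(2) in \<open>auto intro!: borel_measurable_times borel_measurable_diff\<close>)
  then have "(\<lambda>x. \<Sum>b\<in>Basis. (gradient (f x) a \<bullet> b) *\<^sub>R b) \<in> borel_measurable N"
    by measurable
  then show ?thesis
    by (simp add: euclidean_representation)
qed

section \<open>Square-integrable random variables\<close>

lemma integrable_mult_square:
  fixes f g :: "'a \<Rightarrow> real"
  assumes "f \<in> borel_measurable M" "g \<in> borel_measurable M"
    and "integrable M (\<lambda>x. (f x)\<^sup>2)" "integrable M (\<lambda>x. (g x)\<^sup>2)"
  shows "integrable M (\<lambda>x. f x * g x)"
proof (rule Bochner_Integration.integrable_bound)
  show "integrable M (\<lambda>x. (f x)\<^sup>2 + (g x)\<^sup>2)"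
    using assms by auto
  have "\<bar>f x * g x\<bar> \<le> (f x)\<^sup>2 + (g x)\<^sup>2" for x
    using sum_squares_bound[of "\<bar>f x\<bar>" "\<bar>g x\<bar>"] abs_ge_zero[of "f x * g x"]
    by (simp only: abs_mult power2_abs)
  then show "AE x in M. norm (f x * g x) \<le> norm ((f x)\<^sup>2 + (g x)\<^sup>2)"
    by auto
qed (use assms in auto)

lemma integrable_square_add:
  fixes f g :: "'a \<Rightarrow> real"
  assumes "f \<in> borel_measurable M" "g \<in> borel_measurable M"
    and "integrable M (\<lambda>x. (f x)\<^sup>2)" "integrable M (\<lambda>x. (g x)\<^sup>2)"
  shows "integrable M (\<lambda>x. (f x + g x)\<^sup>2)"
  using assms integrable_mult_square[OF assms] by (simp add: power2_sum mult.assoc)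

lemma integrable_square_diff:
  fixes f g :: "'a \<Rightarrow> real"
  assumes "f \<in> borel_measurable M" "g \<in> borel_measurable M"
    and "integrable M (\<lambda>x. (f x)\<^sup>2)" "integrable M (\<lambda>x. (g x)\<^sup>2)"
  shows "integrable M (\<lambda>x. (f x - g x)\<^sup>2)"
  using assms integrable_mult_square[OF assms] by (simp add: power2_diff mult.assoc)

lemma integrable_inner_square:
  fixes S :: "'a \<Rightarrow> 'p::euclidean_space"
  assumes "S \<in> borel_measurable M" "integrable M (\<lambda>x. (norm (S x))\<^sup>2)"
  shows "integrable M (\<lambda>x. (S x \<bullet> b)\<^sup>2)"
proof (rule Bochner_Integration.integrable_bound)
  show "integrable M (\<lambda>x. (norm b)\<^sup>2 * (norm (S x))\<^sup>2)"
    using assms by simp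
  have "(S x \<bullet> b)\<^sup>2 \<le> (norm b)\<^sup>2 * (norm (S x))\<^sup>2" for x
    using power_mono[OF Cauchy_Schwarz_ineq2[of "S x" b], of 2]
    by (simp add: power_mult_distrib mult.commute)
  then show "AE x in M. norm ((S x \<bullet> b)\<^sup>2) \<le> norm ((norm b)\<^sup>2 * (norm (S x))\<^sup>2)"
    by auto
qed (use assms in auto)

lemma integrable_scaleR_square:
  fixes S :: "'a \<Rightarrow> 'p::euclidean_space" and f :: "'a \<Rightarrow> real"
  assumes "S \<in> borel_measurable M" "integrable M (\<lambda>x. (norm (S x))\<^sup>2)"
    and "f \<in> borel_measurable M" "integrable M (\<lambda>x. (f x)\<^sup>2)"
  shows "integrable M (\<lambda>x. f x *\<^sub>R S x)"
proof (rule Bochner_Integration.integrable_bound)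
  show "integrable M (\<lambda>x. f x * norm (S x))"
    using assms by (intro integrable_mult_square) auto
qed (use assms in \<open>auto simp: abs_mult\<close>)

lemma var_rv_cong_AE:
  fixes f g :: "'a \<Rightarrow> real"
  assumes "f \<in> borel_measurable M" "g \<in> borel_measurable M" "AE x in M. f x = g x"
  shows "var_rv M f = var_rv M g"
proof -
  have "(\<integral>x. f x \<partial>M) = (\<integral>x. g x \<partial>M)"
    using assms by (intro integral_cong_AE) auto
  moreover have "(\<integral>x. (f x - c)\<^sup>2 \<partial>M) = (\<integral>x. (g x - c)\<^sup>2 \<partial>M)" for c
    using assms by (intro integral_cong_AE) auto
  ultimately show ?thesis
    unfolding var_rv_def by simp
qed

context prob_space
begin

lemma var_rv_add_uncorrelated:
  fixes U V :: "'a \<Rightarrow> real"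
  assumes [measurable]: "U \<in> borel_measurable M" "V \<in> borel_measurable M"
    and U2: "integrable M (\<lambda>x. (U x)\<^sup>2)" and V2: "integrable M (\<lambda>x. (V x)\<^sup>2)"
    and uncorrelated: "(\<integral>x. U x * V x \<partial>M) = expectation U * expectation V"
  shows "var_rv M (\<lambda>x. U x + V x) = var_rv M U + var_rv M V"
proof -
  have [simp]: "integrable M U" "integrable M V"
    using U2 V2 by (auto intro: square_integrable_imp_integrable)
  have [simp]: "integrable M (\<lambda>x. U x * V x)"
    using U2 V2 by (intro integrable_mult_square) auto
  have UV2: "integrable M (\<lambda>x. (U x + V x)\<^sup>2)"
    using U2 V2 by (intro integrable_square_add) auto
  have "var_rv M (\<lambda>x. U x + V x) = expectation (\<lambda>x. (U x + V x)\<^sup>2) - (expectation (\<lambda>x. U x + V x))\<^sup>2"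
    unfolding var_rv_def using UV2 by (intro variance_eq) auto
  also have "\<dots> = (expectation (\<lambda>x. (U x)\<^sup>2) - (expectation U)\<^sup>2)
      + (expectation (\<lambda>x. (V x)\<^sup>2) - (expectation V)\<^sup>2)"
    using U2 V2 by (simp add: power2_sum mult.assoc uncorrelated)
  also have "\<dots> = var_rv M U + var_rv M V"
    unfolding var_rv_def using U2 V2 by (simp add: variance_eq)
  finally show ?thesis .
qed

lemma var_rv_least_squares:
  fixes S :: "'a \<Rightarrow> 'p::euclidean_space" and f :: "'a \<Rightarrow> real"
  assumes [measurable]: "S \<in> borel_measurable M" "f \<in> borel_measurable M"
    and S2: "integrable M (\<lambda>x. (norm (S x))\<^sup>2)" and f2: "integrable M (\<lambda>x. (f x)\<^sup>2)"
    and S_mean: "\<And>b. expectation (\<lambda>x. S x \<bullet> b) = 0"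
    and normal_eq: "\<And>u. expectation (\<lambda>x. (f x - a \<bullet> S x) * (S x \<bullet> u)) = 0"
  shows "var_rv M (\<lambda>x. f x - a \<bullet> S x) \<le> var_rv M (\<lambda>x. f x - c \<bullet> S x)"
proof -
  have Sb2: "integrable M (\<lambda>x. (S x \<bullet> b)\<^sup>2)" for b
    using S2 by (intro integrable_inner_square) auto
  have "var_rv M (\<lambda>x. f x - a \<bullet> S x) \<le> var_rv M (\<lambda>x. f x - a \<bullet> S x) + var_rv M (\<lambda>x. S x \<bullet> (a - c))"
    by (simp add: var_rv_def)
  also have "\<dots> = var_rv M (\<lambda>x. (f x - a \<bullet> S x) + S x \<bullet> (a - c))"
    using f2 Sb2[of a] Sb2[of "a - c"]
    by (intro var_rv_add_uncorrelated[symmetric] integrable_square_diff)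
      (auto simp: normal_eq S_mean inner_commute)
  also have "(\<lambda>x. (f x - a \<bullet> S x) + S x \<bullet> (a - c)) = (\<lambda>x. f x - c \<bullet> S x)"
    by (simp add: inner_diff_right inner_commute)
  finally show ?thesis .
qed

end

lemma integral_eq_0_by_truncation:
  fixes f :: "'a \<Rightarrow> real"
  assumes f: "integrable M f" and A: "\<And>n. A n \<in> sets M"
    and eventually_in: "AE x in M. \<forall>\<^sub>F n in sequentially. x \<in> A n"
    and zero: "\<And>n. (\<integral>x. indicator (A n) x * f x \<partial>M) = 0"
  shows "(\<integral>x. f x \<partial>M) = 0"
proof -
  have "(\<lambda>n. \<integral>x. indicator (A n) x * f x \<partial>M) \<longlonglongrightarrow> (\<integral>x. f x \<partial>M)"
  proof (rule integral_dominated_convergence[where w="\<lambda>x. norm (f x)"])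
    show "AE x in M. (\<lambda>n. indicator (A n) x * f x) \<longlonglongrightarrow> f x"
      using eventually_in
      by eventually_elim (auto intro: tendsto_eventually elim!: eventually_mono)
  qed (use f A in \<open>auto simp: abs_mult indicator_def\<close>)
  then show ?thesis
    by (simp add: zero LIMSEQ_const_iff)
qed

section \<open>The doubly robust function and the Bernoulli log-likelihood\<close>

lemma DERIV_ln_nonzero:
  fixes x :: real
  assumes "x \<noteq> 0"
  shows "(ln has_real_derivative inverse x) (at x)"
proof (cases "x > 0")
  case True
  then show ?thesis
    by (rule DERIV_ln)
next
  case False
  with assms have "((\<lambda>t. ln (- t)) has_real_derivative inverse (- x) * (- 1)) (at x)"
    by (intro DERIV_chain2[OF DERIV_ln]) (auto intro!: derivative_eq_intros)
  moreover have "(\<lambda>t::real. ln (- t)) = ln"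
    by (simp add: fun_eq_iff ln_minus)
  ultimately show ?thesis
    by simp
qed

lemma ln_nonpos_if_abs_less_1:
  fixes x :: real
  assumes "\<bar>x\<bar> < 1"
  shows "ln x \<le> 0"
proof (cases "x < 0")
  case True
  then show ?thesis
    using assms ln_minus[of x] ln_le_zero_iff[of "- x"] by simp
next
  case False
  then show ?thesis
    using assms by (cases "x = 0") auto
qed

lemma DERIV_phi:
  fixes e :: real
  assumes "e \<noteq> 0" "e \<noteq> 1"
  shows "((\<lambda>t. phi t q1 q0 z y \<tau>) has_real_derivative
           (- (z * (y - q1)) / e\<^sup>2 - (1 - z) * (y - q0) / (1 - e)\<^sup>2)) (at e)"
proof -
  have "1 - e \<noteq> 0"
    using assms by simp
  with assms show ?thesis
    unfolding phi_def
    apply -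
    apply (rule derivative_eq_intros refl | assumption)+
    by (simp add: divide_inverse power2_eq_square inverse_mult_distrib algebra_simps)
qed

lemma phi_residual_form:
  fixes e :: real
  assumes "z = 0 \<or> z = 1" "e \<noteq> 0" "e \<noteq> 1"
  shows "phi e q1 q0 z y \<tau> = (y - (z * q1 + (1 - z) * q0)) * (z / e - (1 - z) / (1 - e)) + (q1 - q0 - \<tau>)"
proof -
  have "e * inverse e = 1" "(1 - e) * inverse (1 - e) = 1"
    using assms by auto
  with assms(1) show ?thesis
    unfolding phi_def divide_inverse by (elim disjE) algebra+
qed

lemma phi_change_outcome_model:
  "phi e q1 q0 z y \<tau> = phi e p1 p0 z y \<tau> + (z - e) * ((p1 / e + p0 / (1 - e)) - (q1 / e + q0 / (1 - e)))"
  unfolding phi_def divide_inverse by (simp add: algebra_simps)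

lemma phi_deriv_score_identity:
  fixes e :: real
  assumes "z = 0 \<or> z = 1" "0 < e" "e < 1"
  shows "(- (z * (y - q1)) / e\<^sup>2 - (1 - z) * (y - q0) / (1 - e)\<^sup>2)
          + phi e q1 q0 z y \<tau> * ((z - e) / (e * (1 - e)))
        = (q1 - q0 - \<tau>) * ((z - e) / (e * (1 - e)))"
proof -
  have "e * inverse e = 1" "(1 - e) * inverse (1 - e) = 1"
    using assms by auto
  with assms(1) show ?thesis
    unfolding phi_def divide_inverse power2_eq_square inverse_mult_distrib
    by (elim disjE) algebra+
qed

lemma gradient_loglik:
  fixes E :: "'p::euclidean_space \<Rightarrow> real"
  assumes "z = 0 \<or> z = 1" "E differentiable (at \<theta>)"
    and "\<not> ((z = 1 \<and> E \<theta> = 0) \<or> (z = 0 \<and> E \<theta> = 1))"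
  shows "gradient (\<lambda>\<theta>. loglik (E \<theta>) z) \<theta> = (z / E \<theta> - (1 - z) / (1 - E \<theta>)) *\<^sub>R gradient E \<theta>"
proof -
  note E' = gradient_has_derivative[OF assms(2)]
  show ?thesis
  proof (cases "z = 0")
    case True
    with assms(3) have "((\<lambda>t. ln (1 - t)) has_real_derivative inverse (1 - E \<theta>) * (- 1)) (at (E \<theta>))"
      by (intro DERIV_chain2[OF DERIV_ln_nonzero]) (auto intro!: derivative_eq_intros)
    from gradient_eqI[OF has_derivative_real_comp_gradient[OF E' this]] True
    show ?thesis
      by (simp add: loglik_def divide_inverse)
  next
    case False
    with assms have "z = 1" "E \<theta> \<noteq> 0"
      by auto
    from gradient_eqI[OF has_derivative_real_comp_gradient[OF E' DERIV_ln_nonzero[OF \<open>E \<theta> \<noteq> 0\<close>]]]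
    show ?thesis
      using \<open>z = 1\<close> by (simp add: loglik_def divide_inverse)
  qed
qed

(* ln 0 = 0, so at a boundary point the log-likelihood has a local maximum: its gradient is 0 if
   it exists and the junk value of the SOME in gradient_def otherwise. *)
lemma gradient_loglik_boundary:
  fixes E :: "'p::euclidean_space \<Rightarrow> real"
  assumes "E differentiable (at \<theta>)"
    and boundary: "(z = 1 \<and> E \<theta> = 0) \<or> (z = 0 \<and> E \<theta> = 1)"
  shows "gradient (\<lambda>\<theta>. loglik (E \<theta>) z) \<theta> = 0 \<or> gradient (\<lambda>\<theta>. loglik (E \<theta>) z) \<theta> = (SOME g. False)"
proof (cases "\<exists>g. ((\<lambda>\<theta>. loglik (E \<theta>) z) has_derivative (\<lambda>h. g \<bullet> h)) (at \<theta>)")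
  case False
  then show ?thesis
    unfolding gradient_def by simp
next
  case True
  then obtain g where g: "((\<lambda>\<theta>. loglik (E \<theta>) z) has_derivative (\<lambda>h. g \<bullet> h)) (at \<theta>)"
    by blast
  have "(E \<longlongrightarrow> E \<theta>) (at \<theta>)"
    using differentiable_imp_continuous_within[OF assms(1)] by (simp add: continuous_at)
  then have "\<forall>\<^sub>F \<theta>' in at \<theta>. dist (E \<theta>') (E \<theta>) < 1"
    by (rule tendstoD) simp
  then obtain d where "d > 0" and d: "\<And>\<theta>'. \<theta>' \<noteq> \<theta> \<Longrightarrow> dist \<theta>' \<theta> < d \<Longrightarrow> dist (E \<theta>') (E \<theta>) < 1"
    unfolding eventually_at by blast
  have "loglik (E \<theta>') z \<le> loglik (E \<theta>) z" if "\<theta>' \<in> ball \<theta> d" for \<theta>'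
  proof -
    have "\<bar>E \<theta>' - E \<theta>\<bar> < 1"
      using d[of \<theta>'] that \<open>d > 0\<close> by (cases "\<theta>' = \<theta>") (auto simp: dist_commute dist_real_def)
    with boundary show ?thesis
      by (auto simp: loglik_def intro!: ln_nonpos_if_abs_less_1)
  qed
  then have "(\<lambda>h. g \<bullet> h) = (\<lambda>h. 0)"
    using \<open>d > 0\<close> by (intro differential_zero_maxmin[where S="ball \<theta> d", OF _ _ g]) auto
  then have "g = 0"
    by (metis inner_eq_zero_iff)
  with g show ?thesis
    using gradient_eqI by blast
qed

lemma gradient_phi:
  fixes E :: "'p::euclidean_space \<Rightarrow> real"
  assumes "E differentiable (at \<theta>)" "E \<theta> \<noteq> 0" "E \<theta> \<noteq> 1"
  shows "gradient (\<lambda>\<theta>. phi (E \<theta>) q1 q0 z y \<tau>) \<theta>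
     = (- (z * (y - q1)) / (E \<theta>)\<^sup>2 - (1 - z) * (y - q0) / (1 - E \<theta>)\<^sup>2) *\<^sub>R gradient E \<theta>"
  using has_derivative_real_comp_gradient[OF gradient_has_derivative DERIV_phi] assms
  by (intro gradient_eqI) blast

lemma abs_ipw_residual_le:
  fixes e z :: real
  assumes "z = 0 \<or> z = 1" "0 < e" "e < 1"
  shows "\<bar>(z / e - (1 - z) / (1 - e)) * (z - e)\<bar> \<le> 1 / e + 1 / (1 - e)"
  using assms(1)
proof
  assume "z = 0"
  with assms have "\<bar>(z / e - (1 - z) / (1 - e)) * (z - e)\<bar> = e / (1 - e)"
    by (simp add: abs_mult)
  also have "\<dots> \<le> 1 / (1 - e)"
    using assms by (simp add: divide_right_mono)
  finally show ?thesis
    using assms by (simp add: add_increasing)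
next
  assume "z = 1"
  with assms have "\<bar>(z / e - (1 - z) / (1 - e)) * (z - e)\<bar> = (1 - e) / e"
    by (simp add: abs_mult)
  also have "\<dots> \<le> 1 / e"
    using assms by (simp add: divide_right_mono)
  finally show ?thesis
    using assms by (simp add: add_increasing2)
qed

section \<open>Treatment assignment independent of W given X\<close>

lemma (in prob_space) sigma_finite_subalgebra_vimage:
  assumes "V \<in> measurable M N"
  shows "sigma_finite_subalgebra M (vimage_algebra (space M) V N)"
proof -
  have "subalgebra M (vimage_algebra (space M) V N)"
    unfolding subalgebra_def using sets_image_in_sets[OF refl assms] by simp
  then show ?thesis
    by (intro finite_measure_subalgebra_is_sigma_finite)
      (simp add: finite_measure_subalgebra_def finite_measure_subalgebra_axioms_def finite_measure_axioms)
qed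

lemma measurable_vimage_algebra_comp:
  assumes "V \<in> measurable M N" "h \<in> borel_measurable N"
  shows "(\<lambda>x. h (V x)) \<in> borel_measurable (vimage_algebra (space M) V N)"
  using measurable_compose[OF measurable_vimage_algebra1 assms(2)] measurable_space[OF assms(1)]
  by blast

lemma cond_indep_fst_borel:
  fixes C :: "'a \<Rightarrow> 'c::topological_space"
  assumes "cond_indep M A MA (\<lambda>\<omega>. (B \<omega>, C \<omega>)) (MB \<Otimes>\<^sub>M borel) V MV"
  shows "cond_indep M A MA B MB V MV"
  unfolding cond_indep_def
proof (intro ballI)
  fix SA SB assume "SA \<in> sets MA" "SB \<in> sets MB"
  moreover have "SB \<times> UNIV \<in> sets (MB \<Otimes>\<^sub>M (borel :: 'c measure))"
    using \<open>SB \<in> sets MB\<close> by (metis pair_measureI sets.top space_borel)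
  ultimately have "AE \<omega> in M.
      cond_exp_given M V MV (\<lambda>\<nu>. indicator SA (A \<nu>) * indicator (SB \<times> UNIV) (B \<nu>, C \<nu>)) \<omega>
      = cond_exp_given M V MV (\<lambda>\<nu>. indicator SA (A \<nu>)) \<omega>
        * cond_exp_given M V MV (\<lambda>\<nu>. indicator (SB \<times> UNIV) (B \<nu>, C \<nu>)) \<omega>"
    using assms unfolding cond_indep_def by blast
  moreover have "\<And>\<nu>. indicator (SB \<times> UNIV) (B \<nu>, C \<nu>) = (indicator SB (B \<nu>) :: real)"
    by (simp add: indicator_def)
  ultimately show "AE \<omega> in M.
      cond_exp_given M V MV (\<lambda>\<nu>. indicator SA (A \<nu>) * indicator SB (B \<nu>)) \<omega>
      = cond_exp_given M V MV (\<lambda>\<nu>. indicator SA (A \<nu>)) \<omega>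
        * cond_exp_given M V MV (\<lambda>\<nu>. indicator SB (B \<nu>)) \<omega>"
    by simp
qed

lemma emeasure_distr_density_eq_integral:
  fixes w :: "'a \<Rightarrow> real"
  assumes V: "V \<in> measurable M N" and w: "integrable M w" "AE x in M. 0 \<le> w x" and C: "C \<in> sets N"
  shows "emeasure (distr (density M w) N V) C = ennreal (\<integral>x. w x * indicator C (V x) \<partial>M)"
proof -
  have [measurable]: "w \<in> borel_measurable M" "V \<in> measurable M N" "C \<in> sets N"
    using assms by auto
  have "emeasure (distr (density M w) N V) C = (\<integral>\<^sup>+x. ennreal (w x) * indicator (V -` C \<inter> space M) x \<partial>M)"
    by (simp add: emeasure_distr emeasure_density)
  also have "\<dots> = (\<integral>\<^sup>+x. ennreal (w x * indicator C (V x)) \<partial>M)"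
    by (intro nn_integral_cong) (auto simp: indicator_def)
  also have "\<dots> = ennreal (\<integral>x. w x * indicator C (V x) \<partial>M)"
  proof (rule nn_integral_eq_integral)
    show "integrable M (\<lambda>x. w x * indicator C (V x))"
      by (rule Bochner_Integration.integrable_bound[OF w(1)]) (auto simp: indicator_def)
  qed (use w(2) in \<open>auto simp: indicator_def\<close>)
  finally show ?thesis .
qed

locale propensity_setting = prob_space M for M :: "'a measure" +
  fixes X :: "'a \<Rightarrow> 'x" and MX :: "'x measure" and W :: "'a \<Rightarrow> 'w" and MW :: "'w measure"
    and Z :: "'a \<Rightarrow> real" and e :: "'x \<Rightarrow> real" and Y :: "'a \<Rightarrow> real"
  assumes X_measurable [measurable]: "X \<in> measurable M MX"
    and W_measurable [measurable]: "W \<in> measurable M MW"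
    and Z_measurable [measurable]: "Z \<in> borel_measurable M"
    and Z_binary: "\<And>\<omega>. \<omega> \<in> space M \<Longrightarrow> Z \<omega> = 0 \<or> Z \<omega> = 1"
    and Z_indep_W: "cond_indep M Z borel W MW X MX"
    and e_measurable [measurable]: "e \<in> borel_measurable MX"
    and e_prop_score: "AE \<omega> in M. e (X \<omega>) = prop_score M X MX Z \<omega>"
    and e_bounds: "AE \<omega> in M. 0 < e (X \<omega>) \<and> e (X \<omega>) < 1"
    and Y_measurable [measurable]: "Y \<in> borel_measurable M"
    and Y_integrable: "integrable M Y"
begin

lemma Z_abs_le_1: "AE \<omega> in M. \<bar>Z \<omega>\<bar> \<le> 1" and Z_nonneg: "AE \<omega> in M. 0 \<le> Z \<omega>"
  by (auto intro!: AE_I2 dest: Z_binary)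

lemma integrable_Z [simp]: "integrable M Z"
  using Z_abs_le_1 by (intro integrable_const_bound[where B=1]) auto

lemma integrable_e_X [simp]: "integrable M (\<lambda>\<omega>. e (X \<omega>))"
  using e_bounds by (intro integrable_const_bound[where B=1]) (auto elim!: AE_mp)

lemma integral_Z_rectangle:
  assumes A: "A \<in> sets MX" and B: "B \<in> sets MW"
  shows "(\<integral>\<omega>. Z \<omega> * (indicator A (X \<omega>) * indicator B (W \<omega>)) \<partial>M)
       = (\<integral>\<omega>. e (X \<omega>) * (indicator A (X \<omega>) * indicator B (W \<omega>)) \<partial>M)"
proof -
  define F where "F = vimage_algebra (space M) X MX"
  interpret sigma_finite_subalgebra M F
    unfolding F_def by (rule sigma_finite_subalgebra_vimage[OF X_measurable])
  define iZ where "iZ = (\<lambda>\<omega>. indicator {1::real} (Z \<omega>) :: real)"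
  define iA where "iA = (\<lambda>\<omega>. indicator A (X \<omega>) :: real)"
  define iB where "iB = (\<lambda>\<omega>. indicator B (W \<omega>) :: real)"
  have [measurable]: "iZ \<in> borel_measurable M" "iA \<in> borel_measurable M" "iB \<in> borel_measurable M"
    unfolding iZ_def iA_def iB_def using A B by measurable
  have iA_F [measurable]: "iA \<in> borel_measurable F"
    unfolding iA_def F_def using A by (intro measurable_vimage_algebra_comp) auto
  have bounded: "\<And>\<omega>. \<bar>iZ \<omega>\<bar> \<le> 1" "\<And>\<omega>. \<bar>iA \<omega>\<bar> \<le> 1" "\<And>\<omega>. \<bar>iB \<omega>\<bar> \<le> 1"
    unfolding iZ_def iA_def iB_def by (auto simp: indicator_def)
  have ps: "real_cond_exp M F iZ = prop_score M X MX Z"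
    unfolding prop_score_def cond_exp_given_def F_def iZ_def ..
  have ci: "AE \<omega> in M. real_cond_exp M F (\<lambda>\<nu>. iZ \<nu> * iB \<nu>) \<omega>
                  = real_cond_exp M F iZ \<omega> * real_cond_exp M F iB \<omega>"
    using Z_indep_W B unfolding cond_indep_def cond_exp_given_def F_def iZ_def iB_def by simp
  have int_ps: "integrable M (real_cond_exp M F iZ)"
    using bounded by (intro real_cond_exp_int(1) integrable_const_bound[where B=1]) auto
  have "(\<integral>\<omega>. Z \<omega> * (iA \<omega> * iB \<omega>) \<partial>M) = (\<integral>\<omega>. iA \<omega> * (iZ \<omega> * iB \<omega>) \<partial>M)"
    by (intro Bochner_Integration.integral_cong refl) (use Z_binary in \<open>force simp: iZ_def\<close>)
  also have "\<dots> = (\<integral>\<omega>. iA \<omega> * real_cond_exp M F (\<lambda>\<nu>. iZ \<nu> * iB \<nu>) \<omega> \<partial>M)"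
    using bounded
    by (intro real_cond_exp_intg(2)[symmetric] integrable_const_bound[where B=1])
      (auto simp: abs_mult mult_le_one)
  also have "\<dots> = (\<integral>\<omega>. (iA \<omega> * real_cond_exp M F iZ \<omega>) * real_cond_exp M F iB \<omega> \<partial>M)"
    using ci by (intro integral_cong_AE) auto
  also have "\<dots> = (\<integral>\<omega>. (iA \<omega> * real_cond_exp M F iZ \<omega>) * iB \<omega> \<partial>M)"
  proof (rule real_cond_exp_intg(2))
    show "integrable M (\<lambda>\<omega>. (iA \<omega> * real_cond_exp M F iZ \<omega>) * iB \<omega>)"
    proof (rule Bochner_Integration.integrable_bound[OF int_ps])
      have "\<bar>iA \<omega>\<bar> * \<bar>iB \<omega>\<bar> * \<bar>real_cond_exp M F iZ \<omega>\<bar> \<le> \<bar>real_cond_exp M F iZ \<omega>\<bar>" for \<omega>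
        using bounded by (intro mult_left_le_one_le mult_le_one) auto
      then show "AE \<omega> in M. norm (iA \<omega> * real_cond_exp M F iZ \<omega> * iB \<omega>) \<le> norm (real_cond_exp M F iZ \<omega>)"
        by (simp add: abs_mult mult_ac)
    qed auto
  qed auto
  also have "\<dots> = (\<integral>\<omega>. e (X \<omega>) * (iA \<omega> * iB \<omega>) \<partial>M)"
    using e_prop_score unfolding ps[symmetric] by (intro integral_cong_AE) auto
  finally show ?thesis
    unfolding iA_def iB_def .
qed

lemma integral_Z_indicator:
  assumes C: "C \<in> sets (MX \<Otimes>\<^sub>M MW)"
  shows "(\<integral>\<omega>. Z \<omega> * indicator C (X \<omega>, W \<omega>) \<partial>M) = (\<integral>\<omega>. e (X \<omega>) * indicator C (X \<omega>, W \<omega>) \<partial>M)"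
proof -
  have XW: "(\<lambda>\<omega>. (X \<omega>, W \<omega>)) \<in> measurable M (MX \<Otimes>\<^sub>M MW)"
    by measurable
  have e_nonneg: "AE \<omega> in M. 0 \<le> e (X \<omega>)"
    using e_bounds by (auto elim!: AE_mp)
  define \<nu> where "\<nu> w = distr (density M w) (MX \<Otimes>\<^sub>M MW) (\<lambda>\<omega>. (X \<omega>, W \<omega>))" for w
  note \<nu>_Z = emeasure_distr_density_eq_integral[OF XW integrable_Z Z_nonneg, folded \<nu>_def]
  note \<nu>_e = emeasure_distr_density_eq_integral[OF XW integrable_e_X e_nonneg, folded \<nu>_def]
  let ?rect = "{a \<times> b | a b. a \<in> sets MX \<and> b \<in> sets MW}"
  have "\<nu> Z = \<nu> (\<lambda>\<omega>. e (X \<omega>))"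
  proof (rule measure_eqI_generator_eq[where \<Omega>="space MX \<times> space MW" and E="?rect"
        and A="\<lambda>_. space MX \<times> space MW"])
    show "emeasure (\<nu> Z) R = emeasure (\<nu> (\<lambda>\<omega>. e (X \<omega>))) R" if rect: "R \<in> ?rect" for R
    proof -
      obtain A B where AB: "A \<in> sets MX" "B \<in> sets MW" and R: "R = A \<times> B"
        using rect by blast
      have "indicator R (X \<omega>, W \<omega>) = indicator A (X \<omega>) * (indicator B (W \<omega>) :: real)" for \<omega>
        unfolding R by (simp add: indicator_def)
      then show ?thesis
        using \<nu>_Z[of R] \<nu>_e[of R] integral_Z_rectangle[OF AB] pair_measureI[OF AB] unfolding R[symmetric]
        by simp
    qed
    show "emeasure (\<nu> Z) (space MX \<times> space MW) \<noteq> \<infinity>"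
      using \<nu>_Z[of "space MX \<times> space MW"] by (simp add: space_pair_measure[symmetric])
    show "sets (\<nu> Z) = sigma_sets (space MX \<times> space MW) ?rect"
      "sets (\<nu> (\<lambda>\<omega>. e (X \<omega>))) = sigma_sets (space MX \<times> space MW) ?rect"
      unfolding \<nu>_def by (simp_all add: sets_pair_measure)
    show "?rect \<subseteq> Pow (space MX \<times> space MW)"
      by (auto dest: sets.sets_into_space)
    show "Int_stable ?rect"
      by (rule Int_stable_pair_measure_generator)
  qed auto
  then have "ennreal (\<integral>\<omega>. Z \<omega> * indicator C (X \<omega>, W \<omega>) \<partial>M)
      = ennreal (\<integral>\<omega>. e (X \<omega>) * indicator C (X \<omega>, W \<omega>) \<partial>M)"
    using \<nu>_Z[OF C] \<nu>_e[OF C] by simp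
  moreover have "0 \<le> (\<integral>\<omega>. Z \<omega> * indicator C (X \<omega>, W \<omega>) \<partial>M)"
    "0 \<le> (\<integral>\<omega>. e (X \<omega>) * indicator C (X \<omega>, W \<omega>) \<partial>M)"
    using Z_nonneg e_nonneg by (auto intro!: integral_nonneg_AE elim!: AE_mp)
  ultimately show ?thesis
    by simp
qed

lemma integral_propensity_residual:
  assumes [measurable]: "G \<in> borel_measurable (MX \<Otimes>\<^sub>M MW)"
    and int: "integrable M (\<lambda>\<omega>. (Z \<omega> - e (X \<omega>)) * G (X \<omega>, W \<omega>))"
  shows "(\<integral>\<omega>. (Z \<omega> - e (X \<omega>)) * G (X \<omega>, W \<omega>) \<partial>M) = 0"
proof -
  define V where "V = (\<lambda>\<omega>. (X \<omega>, W \<omega>))"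
  define F where "F = vimage_algebra (space M) V (MX \<Otimes>\<^sub>M MW)"
  have V [measurable]: "V \<in> measurable M (MX \<Otimes>\<^sub>M MW)"
    unfolding V_def by measurable
  interpret sigma_finite_subalgebra M F
    unfolding F_def by (rule sigma_finite_subalgebra_vimage[OF V])
  have sets_F: "sets F = {V -` C \<inter> space M | C. C \<in> sets (MX \<Otimes>\<^sub>M MW)}"
    unfolding F_def using measurable_space[OF V] by (intro sets_vimage_algebra2) auto
  have "AE \<omega> in M. real_cond_exp M F (\<lambda>\<omega>. Z \<omega> - e (X \<omega>)) \<omega> = 0"
  proof (rule real_cond_exp_charact)
    fix A assume "A \<in> sets F"
    then obtain C where C: "C \<in> sets (MX \<Otimes>\<^sub>M MW)" and A: "A = V -` C \<inter> space M"
      unfolding sets_F by blast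
    have [measurable]: "C \<in> sets (MX \<Otimes>\<^sub>M MW)"
      by (fact C)
    have "(\<integral>\<omega>\<in>A. Z \<omega> - e (X \<omega>) \<partial>M)
        = (\<integral>\<omega>. Z \<omega> * indicator C (V \<omega>) - e (X \<omega>) * indicator C (V \<omega>) \<partial>M)"
      unfolding set_lebesgue_integral_def A
      by (intro Bochner_Integration.integral_cong) (auto simp: indicator_def)
    also have "\<dots> = (\<integral>\<omega>. Z \<omega> * indicator C (V \<omega>) \<partial>M) - (\<integral>\<omega>. e (X \<omega>) * indicator C (V \<omega>) \<partial>M)"
    proof (rule Bochner_Integration.integral_diff)
      show "integrable M (\<lambda>\<omega>. Z \<omega> * indicator C (V \<omega>))"
        by (rule Bochner_Integration.integrable_bound[OF integrable_Z]) (auto simp: indicator_def)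
      show "integrable M (\<lambda>\<omega>. e (X \<omega>) * indicator C (V \<omega>))"
        by (rule Bochner_Integration.integrable_bound[OF integrable_e_X]) (auto simp: indicator_def)
    qed
    also have "\<dots> = 0"
      using integral_Z_indicator[OF C] by (simp add: V_def)
    finally show "(\<integral>\<omega>\<in>A. Z \<omega> - e (X \<omega>) \<partial>M) = (\<integral>\<omega>\<in>A. 0 \<partial>M)"
      by simp
  qed auto
  moreover have GV_F: "(\<lambda>\<omega>. G (V \<omega>)) \<in> borel_measurable F"
    unfolding F_def by (intro measurable_vimage_algebra_comp) auto
  moreover have "integrable M (\<lambda>\<omega>. G (V \<omega>) * (Z \<omega> - e (X \<omega>)))"
    using int by (simp add: V_def mult.commute)
  ultimately have "(\<integral>\<omega>. G (V \<omega>) * (Z \<omega> - e (X \<omega>)) \<partial>M)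
      = (\<integral>\<omega>. G (V \<omega>) * real_cond_exp M F (\<lambda>\<omega>. Z \<omega> - e (X \<omega>)) \<omega> \<partial>M)"
    by (intro real_cond_exp_intg(2)[symmetric]) auto
  also have "\<dots> = 0"
    using \<open>AE \<omega> in M. real_cond_exp M F (\<lambda>\<omega>. Z \<omega> - e (X \<omega>)) \<omega> = 0\<close>
    by (subst integral_cong_AE[where g="\<lambda>_. 0"]) (auto simp: measurable_from_subalg[OF subalg GV_F])
  finally show ?thesis
    by (simp add: V_def mult.commute)
qed

(* A propensity model is a function of (X, W) and its parameter; a model in X alone ignores W. *)
definition model_loglik :: "('x \<times> 'w \<Rightarrow> 't \<Rightarrow> real) \<Rightarrow> 't \<Rightarrow> 'a \<Rightarrow> real" where
  "model_loglik F \<theta> \<omega> = loglik (F (X \<omega>, W \<omega>) \<theta>) (Z \<omega>)"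

definition model_phi :: "('x \<times> 'w \<Rightarrow> 't \<Rightarrow> real) \<Rightarrow> ('x \<times> 'w \<Rightarrow> real) \<Rightarrow> ('x \<times> 'w \<Rightarrow> real)
    \<Rightarrow> real \<Rightarrow> 't \<Rightarrow> 'a \<Rightarrow> real" where
  "model_phi F Q1 Q0 \<tau> \<theta> \<omega> = phi (F (X \<omega>, W \<omega>) \<theta>) (Q1 (X \<omega>, W \<omega>)) (Q0 (X \<omega>, W \<omega>)) (Z \<omega>) (Y \<omega>) \<tau>"

definition phi_true_ps :: "('x \<times> 'w \<Rightarrow> real) \<Rightarrow> ('x \<times> 'w \<Rightarrow> real) \<Rightarrow> real \<Rightarrow> 'a \<Rightarrow> real" where
  "phi_true_ps Q1 Q0 \<tau> \<omega> = phi (e (X \<omega>)) (Q1 (X \<omega>, W \<omega>)) (Q0 (X \<omega>, W \<omega>)) (Z \<omega>) (Y \<omega>) \<tau>"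

definition outcome_regression :: "('x \<times> 'w \<Rightarrow> real \<Rightarrow> real) \<Rightarrow> bool" where
  "outcome_regression R \<longleftrightarrow>
     (AE \<omega> in M. R (X \<omega>, W \<omega>) (Z \<omega>) = cond_exp_given M (\<lambda>\<omega>. (X \<omega>, W \<omega>, Z \<omega>)) (MX \<Otimes>\<^sub>M MW \<Otimes>\<^sub>M borel) Y \<omega>)"

lemma phi_true_ps_measurable [measurable]:
  assumes [measurable]: "Q1 \<in> borel_measurable (MX \<Otimes>\<^sub>M MW)" "Q0 \<in> borel_measurable (MX \<Otimes>\<^sub>M MW)"
  shows "phi_true_ps Q1 Q0 \<tau> \<in> borel_measurable M"
  unfolding phi_true_ps_def phi_def by measurable

lemma ll_X_eq: "ll_X eX X Z = model_loglik (\<lambda>p :: 'x \<times> 'w. eX (fst p))"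
  by (simp add: fun_eq_iff ll_X_def model_loglik_def)

lemma ll_W_eq: "ll_W eW X W Z = model_loglik (\<lambda>p \<theta>. eW (fst p) (snd p) (fst \<theta>) (snd \<theta>))"
  by (simp add: fun_eq_iff ll_W_def model_loglik_def)

lemma phi_X_eq: "phi_X M eX QX X Z Y Y0 Y1 \<beta>
    = model_phi (\<lambda>p :: 'x \<times> 'w. eX (fst p)) (\<lambda>p. QX (fst p) 1 \<beta>) (\<lambda>p. QX (fst p) 0 \<beta>) (ate M Y0 Y1)"
  by (simp add: fun_eq_iff phi_X_def model_phi_def)

lemma phi_W_eq: "phi_W M eW QW X W Z Y Y0 Y1 \<delta>
    = model_phi (\<lambda>p \<theta>. eW (fst p) (snd p) (fst \<theta>) (snd \<theta>))
        (\<lambda>p. QW (fst p) (snd p) 1 \<delta>) (\<lambda>p. QW (fst p) (snd p) 0 \<delta>) (ate M Y0 Y1)"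
  by (simp add: fun_eq_iff phi_W_def model_phi_def)

lemma integral_outcome_residual:
  fixes R :: "'x \<times> 'w \<Rightarrow> real \<Rightarrow> real" and h :: "'x \<times> 'w \<times> real \<Rightarrow> real"
  assumes R_regression: "outcome_regression R"
    and [measurable]: "(\<lambda>\<omega>. R (X \<omega>, W \<omega>) (Z \<omega>)) \<in> borel_measurable M"
    and [measurable]: "h \<in> borel_measurable (MX \<Otimes>\<^sub>M MW \<Otimes>\<^sub>M borel)"
    and h_bounded: "\<And>\<omega>. \<omega> \<in> space M \<Longrightarrow> \<bar>h (X \<omega>, W \<omega>, Z \<omega>)\<bar> \<le> B"
  shows "integrable M (\<lambda>\<omega>. (Y \<omega> - R (X \<omega>, W \<omega>) (Z \<omega>)) * h (X \<omega>, W \<omega>, Z \<omega>))"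
    and "(\<integral>\<omega>. (Y \<omega> - R (X \<omega>, W \<omega>) (Z \<omega>)) * h (X \<omega>, W \<omega>, Z \<omega>) \<partial>M) = 0"
proof -
  define V where "V = (\<lambda>\<omega>. (X \<omega>, W \<omega>, Z \<omega>))"
  define F where "F = vimage_algebra (space M) V (MX \<Otimes>\<^sub>M MW \<Otimes>\<^sub>M borel)"
  have V [measurable]: "V \<in> measurable M (MX \<Otimes>\<^sub>M MW \<Otimes>\<^sub>M borel)"
    unfolding V_def by measurable
  interpret sigma_finite_subalgebra M F
    unfolding F_def by (rule sigma_finite_subalgebra_vimage[OF V])
  have hV_F: "(\<lambda>\<omega>. h (V \<omega>)) \<in> borel_measurable F"
    unfolding F_def by (intro measurable_vimage_algebra_comp) auto
  have hY: "integrable M (\<lambda>\<omega>. h (V \<omega>) * Y \<omega>)"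
  proof (rule Bochner_Integration.integrable_bound)
    show "integrable M (\<lambda>\<omega>. B * Y \<omega>)"
      using Y_integrable by simp
    show "AE \<omega> in M. norm (h (V \<omega>) * Y \<omega>) \<le> norm (B * Y \<omega>)"
    proof (rule AE_I2)
      fix \<omega> assume "\<omega> \<in> space M"
      then have "\<bar>h (V \<omega>)\<bar> * \<bar>Y \<omega>\<bar> \<le> \<bar>B\<bar> * \<bar>Y \<omega>\<bar>"
        using h_bounded[of \<omega>] by (intro mult_right_mono) (auto simp: V_def)
      then show "norm (h (V \<omega>) * Y \<omega>) \<le> norm (B * Y \<omega>)"
        by (simp add: abs_mult)
    qed
  qed simp
  have R_eq: "AE \<omega> in M. h (V \<omega>) * R (X \<omega>, W \<omega>) (Z \<omega>) = h (V \<omega>) * real_cond_exp M F Y \<omega>"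
    using R_regression unfolding outcome_regression_def
    by eventually_elim (simp add: cond_exp_given_def F_def V_def)
  have hR: "integrable M (\<lambda>\<omega>. h (V \<omega>) * R (X \<omega>, W \<omega>) (Z \<omega>))"
    using real_cond_exp_intg(1)[OF hY hV_F Y_measurable] _ AE_symmetric[OF R_eq]
    by (rule integrable_cong_AE_imp) (simp add: V_def)
  have split: "(Y \<omega> - R (X \<omega>, W \<omega>) (Z \<omega>)) * h (X \<omega>, W \<omega>, Z \<omega>)
      = h (V \<omega>) * Y \<omega> - h (V \<omega>) * R (X \<omega>, W \<omega>) (Z \<omega>)" for \<omega>
    by (simp add: V_def algebra_simps)
  show "integrable M (\<lambda>\<omega>. (Y \<omega> - R (X \<omega>, W \<omega>) (Z \<omega>)) * h (X \<omega>, W \<omega>, Z \<omega>))"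
    unfolding split using hY hR by simp
  have "(\<integral>\<omega>. h (V \<omega>) * R (X \<omega>, W \<omega>) (Z \<omega>) \<partial>M) = (\<integral>\<omega>. h (V \<omega>) * real_cond_exp M F Y \<omega> \<partial>M)"
    using R_eq by (intro integral_cong_AE) (auto simp: V_def)
  also have "\<dots> = (\<integral>\<omega>. h (V \<omega>) * Y \<omega> \<partial>M)"
    by (rule real_cond_exp_intg(2)[OF hY hV_F Y_measurable])
  finally show "(\<integral>\<omega>. (Y \<omega> - R (X \<omega>, W \<omega>) (Z \<omega>)) * h (X \<omega>, W \<omega>, Z \<omega>) \<partial>M) = 0"
    unfolding split using hY hR by simp
qed

lemma integral_phi_true_ps_residual_truncated:
  fixes R :: "'x \<times> 'w \<Rightarrow> real \<Rightarrow> real" and G :: "'x \<times> 'w \<Rightarrow> real"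
  assumes R_measurable [measurable]: "\<And>z. (\<lambda>p. R p z) \<in> borel_measurable (MX \<Otimes>\<^sub>M MW)"
    and R_regression: "outcome_regression R"
    and [measurable]: "G \<in> borel_measurable (MX \<Otimes>\<^sub>M MW)"
    and support: "\<And>p. G p \<noteq> 0 \<Longrightarrow> 0 < e (fst p) \<and> e (fst p) < 1 \<and> 1 / e (fst p) \<le> c
        \<and> 1 / (1 - e (fst p)) \<le> c \<and> \<bar>G p\<bar> \<le> c \<and> \<bar>R p 1 - R p 0 - \<tau>\<bar> \<le> c"
  shows "(\<integral>\<omega>. phi_true_ps (\<lambda>p. R p 1) (\<lambda>p. R p 0) \<tau> \<omega> * ((Z \<omega> - e (X \<omega>)) * G (X \<omega>, W \<omega>)) \<partial>M) = 0"
proof -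
  define v where "v p = (R p 1 - R p 0 - \<tau>) * G p" for p
  define h where "h t = (snd (snd t) / e (fst t) - (1 - snd (snd t)) / (1 - e (fst t)))
      * (snd (snd t) - e (fst t)) * G (fst t, fst (snd t))" for t
  have [measurable]: "v \<in> borel_measurable (MX \<Otimes>\<^sub>M MW)" "h \<in> borel_measurable (MX \<Otimes>\<^sub>M MW \<Otimes>\<^sub>M borel)"
    unfolding v_def h_def by measurable
  have RZ_eq: "R (X \<omega>, W \<omega>) (Z \<omega>) = Z \<omega> * R (X \<omega>, W \<omega>) 1 + (1 - Z \<omega>) * R (X \<omega>, W \<omega>) 0"
    if "\<omega> \<in> space M" for \<omega>
    using Z_binary[OF that] by auto
  have [measurable]: "(\<lambda>\<omega>. R (X \<omega>, W \<omega>) (Z \<omega>)) \<in> borel_measurable M"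
    by (subst measurable_cong[OF RZ_eq]) measurable
  have split: "phi_true_ps (\<lambda>p. R p 1) (\<lambda>p. R p 0) \<tau> \<omega> * ((Z \<omega> - e (X \<omega>)) * G (X \<omega>, W \<omega>))
      = (Y \<omega> - R (X \<omega>, W \<omega>) (Z \<omega>)) * h (X \<omega>, W \<omega>, Z \<omega>) + (Z \<omega> - e (X \<omega>)) * v (X \<omega>, W \<omega>)"
    if "\<omega> \<in> space M" for \<omega>
  proof (cases "G (X \<omega>, W \<omega>) = 0")
    case False
    then have "e (X \<omega>) \<noteq> 0" "e (X \<omega>) \<noteq> 1"
      using support[OF False] by auto
    define k where "k = Z \<omega> / e (X \<omega>) - (1 - Z \<omega>) / (1 - e (X \<omega>))"
    have \<psi>_eq: "phi_true_ps (\<lambda>p. R p 1) (\<lambda>p. R p 0) \<tau> \<omega>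
        = (Y \<omega> - R (X \<omega>, W \<omega>) (Z \<omega>)) * k + (R (X \<omega>, W \<omega>) 1 - R (X \<omega>, W \<omega>) 0 - \<tau>)"
      using phi_residual_form[OF Z_binary[OF that]] RZ_eq[OF that] \<open>e (X \<omega>) \<noteq> 0\<close> \<open>e (X \<omega>) \<noteq> 1\<close>
      by (simp add: phi_true_ps_def k_def)
    have h_eq: "h (X \<omega>, W \<omega>, Z \<omega>) = k * (Z \<omega> - e (X \<omega>)) * G (X \<omega>, W \<omega>)"
      by (simp add: h_def k_def)
    show ?thesis
      unfolding \<psi>_eq h_eq by (simp add: v_def algebra_simps)
  qed (simp add: h_def v_def)
  have h_bounded: "\<bar>h (X \<omega>, W \<omega>, Z \<omega>)\<bar> \<le> (c + c) * c" if "\<omega> \<in> space M" for \<omega>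
  proof (cases "G (X \<omega>, W \<omega>) = 0")
    case False
    note bounds = support[OF False, simplified]
    have "\<bar>h (X \<omega>, W \<omega>, Z \<omega>)\<bar> \<le> (1 / e (X \<omega>) + 1 / (1 - e (X \<omega>))) * \<bar>G (X \<omega>, W \<omega>)\<bar>"
      unfolding h_def using abs_ipw_residual_le[OF Z_binary[OF that]] bounds
      by (simp add: abs_mult mult_right_mono)
    also have "\<dots> \<le> (c + c) * c"
      using bounds by (intro mult_mono add_mono) auto
    finally show ?thesis .
  qed (use support in \<open>auto simp: h_def\<close>)
  have v_bounded: "\<bar>(Z \<omega> - e (X \<omega>)) * v (X \<omega>, W \<omega>)\<bar> \<le> c * c" if "\<omega> \<in> space M" for \<omega>
  proof (cases "G (X \<omega>, W \<omega>) = 0")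
    case False
    note bounds = support[OF False, simplified]
    have "\<bar>Z \<omega> - e (X \<omega>)\<bar> \<le> 1"
      using Z_binary[OF that] bounds by auto
    moreover have "\<bar>R (X \<omega>, W \<omega>) 1 - R (X \<omega>, W \<omega>) 0 - \<tau>\<bar> * \<bar>G (X \<omega>, W \<omega>)\<bar> \<le> c * c"
      using bounds by (intro mult_mono) auto
    ultimately show ?thesis
      unfolding v_def abs_mult by (meson abs_ge_zero mult_left_le_one_le order_trans zero_le_mult_iff)
  qed (simp add: v_def)
  have int_v: "integrable M (\<lambda>\<omega>. (Z \<omega> - e (X \<omega>)) * v (X \<omega>, W \<omega>))"
    using v_bounded by (intro integrable_const_bound[where B="c * c"]) auto
  have "(\<integral>\<omega>. phi_true_ps (\<lambda>p. R p 1) (\<lambda>p. R p 0) \<tau> \<omega> * ((Z \<omega> - e (X \<omega>)) * G (X \<omega>, W \<omega>)) \<partial>M)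
      = (\<integral>\<omega>. (Y \<omega> - R (X \<omega>, W \<omega>) (Z \<omega>)) * h (X \<omega>, W \<omega>, Z \<omega>) \<partial>M)
        + (\<integral>\<omega>. (Z \<omega> - e (X \<omega>)) * v (X \<omega>, W \<omega>) \<partial>M)"
    using integral_outcome_residual(1)[where R=R and h=h, OF R_regression _ _ h_bounded] int_v
    by (subst Bochner_Integration.integral_cong[OF refl split]) auto
  also have "\<dots> = 0"
    using integral_outcome_residual(2)[where R=R and h=h, OF R_regression _ _ h_bounded] int_v
    by (simp add: integral_propensity_residual)
  finally show ?thesis .
qed

lemma integral_phi_true_ps_residual:
  fixes R :: "'x \<times> 'w \<Rightarrow> real \<Rightarrow> real" and G :: "'x \<times> 'w \<Rightarrow> real"
  assumes R_measurable [measurable]: "\<And>z. (\<lambda>p. R p z) \<in> borel_measurable (MX \<Otimes>\<^sub>M MW)"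
    and R_regression: "outcome_regression R"
    and [measurable]: "G \<in> borel_measurable (MX \<Otimes>\<^sub>M MW)"
    and int: "integrable M (\<lambda>\<omega>. phi_true_ps (\<lambda>p. R p 1) (\<lambda>p. R p 0) \<tau> \<omega> * ((Z \<omega> - e (X \<omega>)) * G (X \<omega>, W \<omega>)))"
  shows "(\<integral>\<omega>. phi_true_ps (\<lambda>p. R p 1) (\<lambda>p. R p 0) \<tau> \<omega> * ((Z \<omega> - e (X \<omega>)) * G (X \<omega>, W \<omega>)) \<partial>M) = 0"
proof -
  define good where "good n p \<longleftrightarrow> 0 < e (fst p) \<and> e (fst p) < 1 \<and> 1 / e (fst p) \<le> real n
      \<and> 1 / (1 - e (fst p)) \<le> real n \<and> \<bar>G p\<bar> \<le> real n \<and> \<bar>R p 1 - R p 0 - \<tau>\<bar> \<le> real n" for n p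
  have [measurable]: "Measurable.pred (MX \<Otimes>\<^sub>M MW) (good n)" for n
    unfolding good_def by measurable
  \<comment> \<open>on these sets every term of the decomposition of phi* (Z - e) G is bounded\<close>
  show ?thesis
  proof (rule integral_eq_0_by_truncation[OF int, where A="\<lambda>n. {\<omega> \<in> space M. good n (X \<omega>, W \<omega>)}"])
    show "{\<omega> \<in> space M. good n (X \<omega>, W \<omega>)} \<in> sets M" for n
      by measurable
    have large: "\<forall>\<^sub>F n in sequentially. r \<le> real n" for r
      using filterlim_real_sequentially by (simp add: filterlim_at_top)
    show "AE \<omega> in M. \<forall>\<^sub>F n in sequentially. \<omega> \<in> {\<omega> \<in> space M. good n (X \<omega>, W \<omega>)}"
      using e_bounds AE_space
    proof eventually_elim
      case (elim \<omega>)
      then show ?case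
        unfolding good_def
        by (auto intro!: eventually_conj large)
    qed
    show "(\<integral>\<omega>. indicator {\<omega> \<in> space M. good n (X \<omega>, W \<omega>)} \<omega>
        * (phi_true_ps (\<lambda>p. R p 1) (\<lambda>p. R p 0) \<tau> \<omega> * ((Z \<omega> - e (X \<omega>)) * G (X \<omega>, W \<omega>))) \<partial>M) = 0" for n
    proof -
      define Gn where "Gn p = (if good n p then G p else 0)" for p
      have "(\<integral>\<omega>. phi_true_ps (\<lambda>p. R p 1) (\<lambda>p. R p 0) \<tau> \<omega> * ((Z \<omega> - e (X \<omega>)) * Gn (X \<omega>, W \<omega>)) \<partial>M) = 0"
        by (rule integral_phi_true_ps_residual_truncated[OF R_measurable R_regression, where c="real n"])
          (auto simp: Gn_def good_def)
      then show ?thesis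
        by (subst Bochner_Integration.integral_cong[OF refl]) (auto simp: Gn_def indicator_def)
    qed
  qed
qed

lemma var_rv_phi_true_ps_le:
  fixes R :: "'x \<times> 'w \<Rightarrow> real \<Rightarrow> real" and G :: "'x \<times> 'w \<Rightarrow> real"
  assumes R_measurable [measurable]: "\<And>z. (\<lambda>p. R p z) \<in> borel_measurable (MX \<Otimes>\<^sub>M MW)"
    and R_regression: "outcome_regression R"
    and phi2: "integrable M (\<lambda>\<omega>. (phi_true_ps (\<lambda>p. R p 1) (\<lambda>p. R p 0) \<tau> \<omega>)\<^sup>2)"
    and [measurable]: "G \<in> borel_measurable (MX \<Otimes>\<^sub>M MW)" "\<psi> \<in> borel_measurable M"
    and \<psi>2: "integrable M (\<lambda>\<omega>. (\<psi> \<omega>)\<^sup>2)"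
    and \<psi>_eq: "AE \<omega> in M. \<psi> \<omega> = phi_true_ps (\<lambda>p. R p 1) (\<lambda>p. R p 0) \<tau> \<omega> + (Z \<omega> - e (X \<omega>)) * G (X \<omega>, W \<omega>)"
  shows "var_rv M (phi_true_ps (\<lambda>p. R p 1) (\<lambda>p. R p 0) \<tau>) \<le> var_rv M \<psi>"
proof -
  let ?\<phi> = "phi_true_ps (\<lambda>p. R p 1) (\<lambda>p. R p 0) \<tau>"
  define V where "V \<omega> = (Z \<omega> - e (X \<omega>)) * G (X \<omega>, W \<omega>)" for \<omega>
  have [measurable]: "V \<in> borel_measurable M"
    unfolding V_def by measurable
  have "integrable M (\<lambda>\<omega>. (\<psi> \<omega> - ?\<phi> \<omega>)\<^sup>2)"
    using \<psi>2 phi2 by (intro integrable_square_diff) auto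
  then have V2: "integrable M (\<lambda>\<omega>. (V \<omega>)\<^sup>2)"
    by (rule integrable_cong_AE_imp) (use \<psi>_eq in \<open>auto simp: V_def\<close>)
  have "expectation (\<lambda>\<omega>. ?\<phi> \<omega> * V \<omega>) = 0"
    using phi2 V2 unfolding V_def
    by (intro integral_phi_true_ps_residual[OF R_measurable R_regression] integrable_mult_square) auto
  moreover have "expectation V = 0"
    unfolding V_def
    by (intro integral_propensity_residual square_integrable_imp_integrable[OF _ V2[unfolded V_def]]) auto
  ultimately have "var_rv M (\<lambda>\<omega>. ?\<phi> \<omega> + V \<omega>) = var_rv M ?\<phi> + var_rv M V"
    using phi2 V2 by (intro var_rv_add_uncorrelated) auto
  moreover have "var_rv M \<psi> = var_rv M (\<lambda>\<omega>. ?\<phi> \<omega> + V \<omega>)"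
    using \<psi>_eq by (intro var_rv_cong_AE) (auto simp: V_def)
  ultimately show ?thesis
    by (simp add: var_rv_def)
qed

end

section \<open>Maximum-likelihood propensity scores\<close>

locale propensity_model = propensity_setting M X MX W MW Z e Y
  for M :: "'a measure" and X :: "'a \<Rightarrow> 'x" and MX and W :: "'a \<Rightarrow> 'w" and MW and Z e Y +
  fixes F :: "'x \<times> 'w \<Rightarrow> 't::euclidean_space \<Rightarrow> real" and \<theta>0 :: 't
  assumes F_measurable: "\<And>\<theta>. (\<lambda>p. F p \<theta>) \<in> borel_measurable (MX \<Otimes>\<^sub>M MW)"
    and F_differentiable: "\<And>p. p \<in> space (MX \<Otimes>\<^sub>M MW) \<Longrightarrow> F p differentiable (at \<theta>0)"
    and F_correct: "\<And>p. F p \<theta>0 = e (fst p)"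
    and score_square_integrable: "integrable M (\<lambda>\<omega>. (norm (score (model_loglik F) \<theta>0 \<omega>))\<^sup>2)"
    and fisher_info_bij: "bij (fisher_info M (model_loglik F) \<theta>0)"
begin

abbreviation "S \<equiv> score (model_loglik F) \<theta>0"

lemma gradient_F_measurable [measurable]: "(\<lambda>p. gradient (F p) \<theta>0) \<in> borel_measurable (MX \<Otimes>\<^sub>M MW)"
  using F_differentiable F_measurable by (intro borel_measurable_gradient) auto

lemma F_differentiable_XW: "\<omega> \<in> space M \<Longrightarrow> F (X \<omega>, W \<omega>) differentiable (at \<theta>0)"
  using measurable_space[OF X_measurable] measurable_space[OF W_measurable]
  by (intro F_differentiable) (auto simp: space_pair_measure)

lemma model_phi_at_truth: "model_phi F Q1 Q0 \<tau> \<theta>0 = phi_true_ps Q1 Q0 \<tau>"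
  by (simp add: fun_eq_iff model_phi_def phi_true_ps_def F_correct)

lemma score_eq_AE:
  "AE \<omega> in M. S \<omega> = ((Z \<omega> - e (X \<omega>)) / (e (X \<omega>) * (1 - e (X \<omega>)))) *\<^sub>R gradient (F (X \<omega>, W \<omega>)) \<theta>0"
  using e_bounds AE_space
proof eventually_elim
  case (elim \<omega>)
  then have "\<not> ((Z \<omega> = 1 \<and> e (X \<omega>) = 0) \<or> (Z \<omega> = 0 \<and> e (X \<omega>) = 1))"
    "Z \<omega> / e (X \<omega>) - (1 - Z \<omega>) / (1 - e (X \<omega>)) = (Z \<omega> - e (X \<omega>)) / (e (X \<omega>) * (1 - e (X \<omega>)))"
    by (auto simp: field_simps)
  with elim show ?case
    using gradient_loglik[OF Z_binary F_differentiable_XW] F_correct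
    by (simp add: score_def model_loglik_def)
qed

lemma score_measurable [measurable]: "S \<in> borel_measurable M"
proof -
  \<comment> \<open>off the null boundary set the score is given by a formula; on it, the measurable norm
    tells the two possible values apart\<close>
  define boundary where "boundary \<omega> \<longleftrightarrow> (Z \<omega> = 1 \<and> e (X \<omega>) = 0) \<or> (Z \<omega> = 0 \<and> e (X \<omega>) = 1)" for \<omega>
  define R where "R \<omega> = (if boundary \<omega> then (if (norm (S \<omega>))\<^sup>2 = 0 then 0 else (SOME g. False))
      else (Z \<omega> / e (X \<omega>) - (1 - Z \<omega>) / (1 - e (X \<omega>))) *\<^sub>R gradient (F (X \<omega>, W \<omega>)) \<theta>0)" for \<omega>
  have "(\<lambda>\<omega>. (norm (S \<omega>))\<^sup>2) \<in> borel_measurable M"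
    using score_square_integrable by blast
  then have "R \<in> borel_measurable M"
    unfolding R_def boundary_def by measurable
  moreover have "S \<omega> = R \<omega>" if "\<omega> \<in> space M" for \<omega>
  proof (cases "boundary \<omega>")
    case True
    then have "S \<omega> = 0 \<or> S \<omega> = (SOME g. False)"
      using gradient_loglik_boundary[OF F_differentiable_XW[OF that], of "Z \<omega>"]
      by (simp add: boundary_def score_def model_loglik_def F_correct)
    with True show ?thesis
      by (cases "S \<omega> = 0") (simp_all add: R_def)
  next
    case False
    then show ?thesis
      using gradient_loglik[OF Z_binary[OF that] F_differentiable_XW[OF that]]
      by (simp add: R_def boundary_def score_def model_loglik_def F_correct)
  qed
  ultimately show ?thesis
    using measurable_cong[of M S R borel] by simp
qed

lemma score_mean_zero: "expectation (\<lambda>\<omega>. S \<omega> \<bullet> b) = 0"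
proof -
  define G where "G p = (gradient (F p) \<theta>0 \<bullet> b) / (e (fst p) * (1 - e (fst p)))" for p
  have [measurable]: "G \<in> borel_measurable (MX \<Otimes>\<^sub>M MW)"
    unfolding G_def by measurable
  have AE_eq: "AE \<omega> in M. S \<omega> \<bullet> b = (Z \<omega> - e (X \<omega>)) * G (X \<omega>, W \<omega>)"
    using score_eq_AE by eventually_elim (simp add: G_def)
  have "integrable M (\<lambda>\<omega>. S \<omega> \<bullet> b)"
    using integrable_inner_square[OF score_measurable score_square_integrable]
    by (rule square_integrable_imp_integrable[rotated]) simp
  then have "integrable M (\<lambda>\<omega>. (Z \<omega> - e (X \<omega>)) * G (X \<omega>, W \<omega>))"
    by (rule integrable_cong_AE_imp) (use AE_eq in auto)
  then have "expectation (\<lambda>\<omega>. (Z \<omega> - e (X \<omega>)) * G (X \<omega>, W \<omega>)) = 0"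
    by (intro integral_propensity_residual) auto
  moreover have "expectation (\<lambda>\<omega>. S \<omega> \<bullet> b) = expectation (\<lambda>\<omega>. (Z \<omega> - e (X \<omega>)) * G (X \<omega>, W \<omega>))"
    using AE_eq by (intro integral_cong_AE) auto
  ultimately show ?thesis
    by simp
qed

abbreviation "H \<equiv> fisher_info M (model_loglik F) \<theta>0"

lemma integrable_score_inner_square: "integrable M (\<lambda>\<omega>. (S \<omega> \<bullet> b)\<^sup>2)"
  using score_square_integrable by (intro integrable_inner_square) auto

lemma fisher_info_inner: "H v \<bullet> u = expectation (\<lambda>\<omega>. (S \<omega> \<bullet> v) * (S \<omega> \<bullet> u))"
proof -
  have "integrable M (\<lambda>\<omega>. (S \<omega> \<bullet> v) *\<^sub>R S \<omega>)"
    using score_square_integrable integrable_score_inner_square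
    by (intro integrable_scaleR_square) auto
  then show ?thesis
    unfolding fisher_info_def by (subst integral_inner_left[symmetric]) auto
qed

lemma inner_inv_fisher_info: "D \<bullet> inv H s = inv H D \<bullet> s"
proof -
  have H_inv: "H (inv H v) = v" for v
    using fisher_info_bij by (simp add: bij_is_surj surj_f_inv_f)
  have "D \<bullet> inv H s = H (inv H D) \<bullet> inv H s"
    by (simp add: H_inv)
  also have "\<dots> = H (inv H s) \<bullet> inv H D"
    by (simp add: fisher_info_inner mult.commute)
  finally show ?thesis
    by (simp add: H_inv inner_commute)
qed

lemma Sigma_eps_eq_var: "\<exists>a. Sigma_eps M \<phi> (model_loglik F) \<theta>0 = var_rv M (\<lambda>\<omega>. \<phi> \<theta>0 \<omega> - a \<bullet> S \<omega>)"
  unfolding Sigma_eps_def inner_inv_fisher_info by blast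

lemma gradient_phi_plus_phi_score_AE:
  "AE \<omega> in M. gradient (\<lambda>\<theta>. model_phi F Q1 Q0 \<tau> \<theta> \<omega>) \<theta>0 \<bullet> b + model_phi F Q1 Q0 \<tau> \<theta>0 \<omega> * (S \<omega> \<bullet> b)
    = (Z \<omega> - e (X \<omega>)) * ((Q1 (X \<omega>, W \<omega>) - Q0 (X \<omega>, W \<omega>) - \<tau>)
        * ((gradient (F (X \<omega>, W \<omega>)) \<theta>0 \<bullet> b) / (e (X \<omega>) * (1 - e (X \<omega>)))))"
  using score_eq_AE e_bounds AE_space
proof eventually_elim
  case (elim \<omega>)
  then have e: "0 < e (X \<omega>)" "e (X \<omega>) < 1" and z: "Z \<omega> = 0 \<or> Z \<omega> = 1"
    by (auto dest: Z_binary)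
  define k where "k = (Z \<omega> - e (X \<omega>)) / (e (X \<omega>) * (1 - e (X \<omega>)))"
  define c where "c = - (Z \<omega> * (Y \<omega> - Q1 (X \<omega>, W \<omega>))) / (e (X \<omega>))\<^sup>2
      - (1 - Z \<omega>) * (Y \<omega> - Q0 (X \<omega>, W \<omega>)) / (1 - e (X \<omega>))\<^sup>2"
  let ?g = "gradient (F (X \<omega>, W \<omega>)) \<theta>0"
  have "gradient (\<lambda>\<theta>. model_phi F Q1 Q0 \<tau> \<theta> \<omega>) \<theta>0 = c *\<^sub>R ?g"
    using gradient_phi[OF F_differentiable_XW] elim e by (simp add: c_def model_phi_def F_correct)
  then have "gradient (\<lambda>\<theta>. model_phi F Q1 Q0 \<tau> \<theta> \<omega>) \<theta>0 \<bullet> b + model_phi F Q1 Q0 \<tau> \<theta>0 \<omega> * (S \<omega> \<bullet> b)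
      = (c + phi_true_ps Q1 Q0 \<tau> \<omega> * k) * (?g \<bullet> b)"
    using elim by (simp add: k_def model_phi_at_truth algebra_simps)
  also have "\<dots> = (Q1 (X \<omega>, W \<omega>) - Q0 (X \<omega>, W \<omega>) - \<tau>) * k * (?g \<bullet> b)"
    using phi_deriv_score_identity[OF z e, of "Y \<omega>" "Q1 (X \<omega>, W \<omega>)" "Q0 (X \<omega>, W \<omega>)" \<tau>]
    by (simp add: c_def k_def phi_true_ps_def)
  finally show ?case
    by (simp add: k_def)
qed

(* Information identity: integrate gradient_phi_plus_phi_score_AE and use E((Z - e(X)) G(X, W)) = 0. *)
lemma Dmat_model_phi:
  assumes [measurable]: "Q1 \<in> borel_measurable (MX \<Otimes>\<^sub>M MW)" "Q0 \<in> borel_measurable (MX \<Otimes>\<^sub>M MW)"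
    and phi2: "integrable M (\<lambda>\<omega>. (model_phi F Q1 Q0 \<tau> \<theta>0 \<omega>)\<^sup>2)"
    and dphi: "integrable M (\<lambda>\<omega>. gradient (\<lambda>\<theta>. model_phi F Q1 Q0 \<tau> \<theta> \<omega>) \<theta>0)"
  shows "Dmat M (model_phi F Q1 Q0 \<tau>) \<theta>0 = (\<integral>\<omega>. model_phi F Q1 Q0 \<tau> \<theta>0 \<omega> *\<^sub>R S \<omega> \<partial>M)"
proof -
  let ?\<phi> = "model_phi F Q1 Q0 \<tau>"
  let ?D\<phi> = "\<lambda>\<omega>. gradient (\<lambda>\<theta>. ?\<phi> \<theta> \<omega>) \<theta>0"
  have [measurable]: "?\<phi> \<theta>0 \<in> borel_measurable M"
    unfolding model_phi_at_truth by measurable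
  have \<phi>S: "integrable M (\<lambda>\<omega>. ?\<phi> \<theta>0 \<omega> *\<^sub>R S \<omega>)"
    using score_square_integrable phi2 by (intro integrable_scaleR_square) auto
  have "((\<integral>\<omega>. ?D\<phi> \<omega> \<partial>M) + (\<integral>\<omega>. ?\<phi> \<theta>0 \<omega> *\<^sub>R S \<omega> \<partial>M)) \<bullet> b = 0" for b
  proof -
    define G where "G p = (Q1 p - Q0 p - \<tau>) * ((gradient (F p) \<theta>0 \<bullet> b) / (e (fst p) * (1 - e (fst p))))" for p
    have [measurable]: "G \<in> borel_measurable (MX \<Otimes>\<^sub>M MW)"
      unfolding G_def by measurable
    have AE_eq: "AE \<omega> in M. ?D\<phi> \<omega> \<bullet> b + ?\<phi> \<theta>0 \<omega> * (S \<omega> \<bullet> b) = (Z \<omega> - e (X \<omega>)) * G (X \<omega>, W \<omega>)"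
      using gradient_phi_plus_phi_score_AE by (simp add: G_def)
    have int_sum: "integrable M (\<lambda>\<omega>. ?D\<phi> \<omega> \<bullet> b + ?\<phi> \<theta>0 \<omega> * (S \<omega> \<bullet> b))"
      using dphi phi2 integrable_score_inner_square
      by (intro Bochner_Integration.integrable_add integrable_mult_square) auto
    then have "integrable M (\<lambda>\<omega>. (Z \<omega> - e (X \<omega>)) * G (X \<omega>, W \<omega>))"
      by (rule integrable_cong_AE_imp) (use AE_eq in auto)
    then have "expectation (\<lambda>\<omega>. (Z \<omega> - e (X \<omega>)) * G (X \<omega>, W \<omega>)) = 0"
      by (intro integral_propensity_residual) auto
    moreover have "expectation (\<lambda>\<omega>. ?D\<phi> \<omega> \<bullet> b + ?\<phi> \<theta>0 \<omega> * (S \<omega> \<bullet> b))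
        = expectation (\<lambda>\<omega>. ?D\<phi> \<omega> \<bullet> b) + expectation (\<lambda>\<omega>. (?\<phi> \<theta>0 \<omega> *\<^sub>R S \<omega>) \<bullet> b)"
      using dphi integrable_inner_left[OF \<phi>S, of b] by (subst Bochner_Integration.integral_add) auto
    moreover have "\<dots> = ((\<integral>\<omega>. ?D\<phi> \<omega> \<partial>M) + (\<integral>\<omega>. ?\<phi> \<theta>0 \<omega> *\<^sub>R S \<omega> \<partial>M)) \<bullet> b"
      using dphi \<phi>S integral_inner_left[of b M "\<lambda>\<omega>. ?\<phi> \<theta>0 \<omega> *\<^sub>R S \<omega>"]
      by (simp add: inner_add_left)
    moreover have "expectation (\<lambda>\<omega>. ?D\<phi> \<omega> \<bullet> b + ?\<phi> \<theta>0 \<omega> * (S \<omega> \<bullet> b))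
        = expectation (\<lambda>\<omega>. (Z \<omega> - e (X \<omega>)) * G (X \<omega>, W \<omega>))"
      using AE_eq int_sum by (intro integral_cong_AE) auto
    ultimately show ?thesis
      by simp
  qed
  then have "(\<integral>\<omega>. ?D\<phi> \<omega> \<partial>M) + (\<integral>\<omega>. ?\<phi> \<theta>0 \<omega> *\<^sub>R S \<omega> \<partial>M) = 0"
    by (metis inner_eq_zero_iff)
  then show ?thesis
    unfolding Dmat_def by (simp only: neg_eq_iff_add_eq_0)
qed

lemma Sigma_eps_le_var_score_adjusted:
  assumes [measurable]: "Q1 \<in> borel_measurable (MX \<Otimes>\<^sub>M MW)" "Q0 \<in> borel_measurable (MX \<Otimes>\<^sub>M MW)"
    and phi2: "integrable M (\<lambda>\<omega>. (model_phi F Q1 Q0 \<tau> \<theta>0 \<omega>)\<^sup>2)"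
    and dphi: "integrable M (\<lambda>\<omega>. gradient (\<lambda>\<theta>. model_phi F Q1 Q0 \<tau> \<theta> \<omega>) \<theta>0)"
  shows "Sigma_eps M (model_phi F Q1 Q0 \<tau>) (model_loglik F) \<theta>0
      \<le> var_rv M (\<lambda>\<omega>. model_phi F Q1 Q0 \<tau> \<theta>0 \<omega> - c \<bullet> S \<omega>)"
proof -
  let ?\<phi> = "model_phi F Q1 Q0 \<tau> \<theta>0"
  let ?D = "Dmat M (model_phi F Q1 Q0 \<tau>) \<theta>0"
  define a where "a = inv H ?D"
  have [measurable]: "?\<phi> \<in> borel_measurable M"
    unfolding model_phi_at_truth by measurable
  have Ha: "H a = ?D"
    unfolding a_def using fisher_info_bij by (simp add: bij_is_surj surj_f_inv_f)
  have "Sigma_eps M (model_phi F Q1 Q0 \<tau>) (model_loglik F) \<theta>0 = var_rv M (\<lambda>\<omega>. ?\<phi> \<omega> - a \<bullet> S \<omega>)"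
    unfolding Sigma_eps_def a_def inner_inv_fisher_info ..
  also have "\<dots> \<le> var_rv M (\<lambda>\<omega>. ?\<phi> \<omega> - c \<bullet> S \<omega>)"
  proof (rule var_rv_least_squares)
    show "expectation (\<lambda>\<omega>. (?\<phi> \<omega> - a \<bullet> S \<omega>) * (S \<omega> \<bullet> u)) = 0" for u
    proof -
      have int1: "integrable M (\<lambda>\<omega>. ?\<phi> \<omega> * (S \<omega> \<bullet> u))"
        using phi2 integrable_score_inner_square by (intro integrable_mult_square) auto
      have int2: "integrable M (\<lambda>\<omega>. (S \<omega> \<bullet> a) * (S \<omega> \<bullet> u))"
        using integrable_score_inner_square by (intro integrable_mult_square) auto
      have "integrable M (\<lambda>\<omega>. ?\<phi> \<omega> *\<^sub>R S \<omega>)"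
        using score_square_integrable phi2 by (intro integrable_scaleR_square) auto
      then have "?D \<bullet> u = expectation (\<lambda>\<omega>. ?\<phi> \<omega> * (S \<omega> \<bullet> u))"
        using Dmat_model_phi[OF assms] integral_inner_left[of u M "\<lambda>\<omega>. ?\<phi> \<omega> *\<^sub>R S \<omega>"]
        by simp
      moreover have "H a \<bullet> u = expectation (\<lambda>\<omega>. (S \<omega> \<bullet> a) * (S \<omega> \<bullet> u))"
        by (rule fisher_info_inner)
      ultimately show ?thesis
        using int1 int2 Ha by (simp add: left_diff_distrib inner_commute)
    qed
  qed (use phi2 score_square_integrable score_mean_zero in auto)
  finally show ?thesis .
qed

lemma Sigma_eps_le_Sigma_fps:
  assumes "Q1 \<in> borel_measurable (MX \<Otimes>\<^sub>M MW)" "Q0 \<in> borel_measurable (MX \<Otimes>\<^sub>M MW)"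
    and "integrable M (\<lambda>\<omega>. (model_phi F Q1 Q0 \<tau> \<theta>0 \<omega>)\<^sup>2)"
    and "integrable M (\<lambda>\<omega>. gradient (\<lambda>\<theta>. model_phi F Q1 Q0 \<tau> \<theta> \<omega>) \<theta>0)"
  shows "Sigma_eps M (model_phi F Q1 Q0 \<tau>) (model_loglik F) \<theta>0 \<le> Sigma_fps M (model_phi F Q1 Q0 \<tau>) \<theta>0"
  using Sigma_eps_le_var_score_adjusted[OF assms, of 0] by (simp add: Sigma_fps_def)

lemma var_rv_phi_true_ps_le_Sigma_eps:
  fixes R :: "'x \<times> 'w \<Rightarrow> real \<Rightarrow> real"
  assumes R_measurable [measurable]: "\<And>z. (\<lambda>p. R p z) \<in> borel_measurable (MX \<Otimes>\<^sub>M MW)"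
    and R_regression: "outcome_regression R"
    and phi2_R: "integrable M (\<lambda>\<omega>. (phi_true_ps (\<lambda>p. R p 1) (\<lambda>p. R p 0) \<tau> \<omega>)\<^sup>2)"
    and [measurable]: "Q1 \<in> borel_measurable (MX \<Otimes>\<^sub>M MW)" "Q0 \<in> borel_measurable (MX \<Otimes>\<^sub>M MW)"
    and phi2_Q: "integrable M (\<lambda>\<omega>. (model_phi F Q1 Q0 \<tau> \<theta>0 \<omega>)\<^sup>2)"
  shows "var_rv M (phi_true_ps (\<lambda>p. R p 1) (\<lambda>p. R p 0) \<tau>) \<le> Sigma_eps M (model_phi F Q1 Q0 \<tau>) (model_loglik F) \<theta>0"
proof -
  obtain a where a: "Sigma_eps M (model_phi F Q1 Q0 \<tau>) (model_loglik F) \<theta>0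
      = var_rv M (\<lambda>\<omega>. model_phi F Q1 Q0 \<tau> \<theta>0 \<omega> - a \<bullet> S \<omega>)"
    using Sigma_eps_eq_var by blast
  \<comment> \<open>changing the outcome model and adjusting by the score both add a term (Z - e) G(X, W)\<close>
  define G where "G p = (R p 1 / e (fst p) + R p 0 / (1 - e (fst p))) - (Q1 p / e (fst p) + Q0 p / (1 - e (fst p)))
      - (a \<bullet> gradient (F p) \<theta>0) / (e (fst p) * (1 - e (fst p)))" for p
  have [measurable]: "G \<in> borel_measurable (MX \<Otimes>\<^sub>M MW)"
    unfolding G_def by measurable
  have [measurable]: "model_phi F Q1 Q0 \<tau> \<theta>0 \<in> borel_measurable M"
    unfolding model_phi_at_truth by measurable
  have "integrable M (\<lambda>\<omega>. (model_phi F Q1 Q0 \<tau> \<theta>0 \<omega> - a \<bullet> S \<omega>)\<^sup>2)"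
    using phi2_Q integrable_score_inner_square[of a]
    by (intro integrable_square_diff) (auto simp: inner_commute)
  moreover have "AE \<omega> in M. model_phi F Q1 Q0 \<tau> \<theta>0 \<omega> - a \<bullet> S \<omega>
      = phi_true_ps (\<lambda>p. R p 1) (\<lambda>p. R p 0) \<tau> \<omega> + (Z \<omega> - e (X \<omega>)) * G (X \<omega>, W \<omega>)"
    using score_eq_AE
  proof eventually_elim
    case (elim \<omega>)
    then show ?case
      unfolding model_phi_at_truth phi_true_ps_def G_def
      using phi_change_outcome_model[of "e (X \<omega>)" "Q1 (X \<omega>, W \<omega>)" "Q0 (X \<omega>, W \<omega>)" "Z \<omega>" "Y \<omega>" \<tau>
          "R (X \<omega>, W \<omega>) 1" "R (X \<omega>, W \<omega>) 0"]
      by (simp add: algebra_simps)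
  qed
  ultimately show ?thesis
    unfolding a by (intro var_rv_phi_true_ps_le[OF R_measurable R_regression phi2_R]) auto
qed

end

section \<open>Nested propensity and outcome models\<close>

locale nested_dr_models = propensity_setting M X MX W MW Z e Y +
  X: propensity_model M X MX W MW Z e Y "\<lambda>p. eX (fst p)" \<alpha>0 +
  W: propensity_model M X MX W MW Z e Y "\<lambda>p \<theta>. eW (fst p) (snd p) (fst \<theta>) (snd \<theta>)" "(\<alpha>0, 0)"
  for M :: "'a measure" and X :: "'a \<Rightarrow> 'x" and MX and W :: "'a \<Rightarrow> 'w" and MW and Z e Y
    and eX :: "'x \<Rightarrow> 'p::euclidean_space \<Rightarrow> real"
    and eW :: "'x \<Rightarrow> 'w \<Rightarrow> 'p \<Rightarrow> 'q::euclidean_space \<Rightarrow> real" and \<alpha>0 +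
  fixes QX :: "'x \<Rightarrow> real \<Rightarrow> 'b::euclidean_space \<Rightarrow> real"
    and QW :: "'x \<Rightarrow> 'w \<Rightarrow> real \<Rightarrow> 'b \<times> 'c::euclidean_space \<Rightarrow> real"
    and Y0 Y1 :: "'a \<Rightarrow> real"
  assumes nested: "\<And>x w a. eW x w a 0 = eX x a"
    and QX_measurable [measurable]: "\<And>z \<beta>. (\<lambda>x. QX x z \<beta>) \<in> borel_measurable MX"
    and QW_measurable: "\<And>z \<delta>. (\<lambda>(x, w). QW x w z \<delta>) \<in> borel_measurable (MX \<Otimes>\<^sub>M MW)"
    and phi_X_square_integrable: "\<And>\<beta>. integrable M (\<lambda>\<omega>. (phi_X M eX QX X Z Y Y0 Y1 \<beta> \<alpha>0 \<omega>)\<^sup>2)"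
    and phi_W_square_integrable: "\<And>\<delta>. integrable M (\<lambda>\<omega>. (phi_W M eW QW X W Z Y Y0 Y1 \<delta> (\<alpha>0, 0) \<omega>)\<^sup>2)"
    and gradient_phi_X_integrable:
      "\<And>\<beta>. integrable M (\<lambda>\<omega>. gradient (\<lambda>a. phi_X M eX QX X Z Y Y0 Y1 \<beta> a \<omega>) \<alpha>0)"
    and gradient_phi_W_integrable:
      "\<And>\<delta>. integrable M (\<lambda>\<omega>. gradient (\<lambda>\<theta>. phi_W M eW QW X W Z Y Y0 Y1 \<delta> \<theta> \<omega>) (\<alpha>0, 0))"
begin

lemma QW_measurable_fst_snd [measurable]: "(\<lambda>p. QW (fst p) (snd p) z \<delta>) \<in> borel_measurable (MX \<Otimes>\<^sub>M MW)"
  using QW_measurable by (simp add: split_beta')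

lemma Sigma_eps_X_le_Sigma_fps_X:
  "Sigma_eps M (phi_X M eX QX X Z Y Y0 Y1 \<beta>) (ll_X eX X Z) \<alpha>0 \<le> Sigma_fps M (phi_X M eX QX X Z Y Y0 Y1 \<beta>) \<alpha>0"
  using phi_X_square_integrable gradient_phi_X_integrable
  unfolding ll_X_eq phi_X_eq by (intro X.Sigma_eps_le_Sigma_fps) auto

lemma Sigma_eps_W_le_Sigma_fps_W:
  "Sigma_eps M (phi_W M eW QW X W Z Y Y0 Y1 \<delta>) (ll_W eW X W Z) (\<alpha>0, 0)
    \<le> Sigma_fps M (phi_W M eW QW X W Z Y Y0 Y1 \<delta>) (\<alpha>0, 0)"
  using phi_W_square_integrable gradient_phi_W_integrable
  unfolding ll_W_eq phi_W_eq by (intro W.Sigma_eps_le_Sigma_fps) auto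

lemma phi_X_measurable [measurable]: "phi_X M eX QX X Z Y Y0 Y1 \<beta> \<alpha>0 \<in> borel_measurable M"
  unfolding phi_X_eq X.model_phi_at_truth by measurable

lemma phi_W_measurable [measurable]: "phi_W M eW QW X W Z Y Y0 Y1 \<delta> (\<alpha>0, 0) \<in> borel_measurable M"
  unfolding phi_W_eq W.model_phi_at_truth by measurable

lemma score_W_inner_extends_score_X:
  "AE \<omega> in M. (a, 0) \<bullet> score (ll_W eW X W Z) (\<alpha>0, 0) \<omega> = a \<bullet> score (ll_X eX X Z) \<alpha>0 \<omega>"
  using X.score_eq_AE W.score_eq_AE AE_space
proof eventually_elim
  case (elim \<omega>)
  have "gradient (eX (X \<omega>)) \<alpha>0 = fst (gradient (\<lambda>\<theta>. eW (X \<omega>) (W \<omega>) (fst \<theta>) (snd \<theta>)) (\<alpha>0, 0))"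
    using gradient_Pair_zero[OF W.F_differentiable_XW[OF elim(3)]] by (simp add: nested)
  with elim(1,2) show ?case
    unfolding ll_X_eq ll_W_eq by (simp add: inner_commute[of "(a, 0)"] inner_Pair_0 inner_commute[of a])
qed

lemma Sigma_W_le_Sigma_X_if_outcome_extends:
  assumes "AE \<omega> in M. QW (X \<omega>) (W \<omega>) 1 (\<beta>, 0) = QX (X \<omega>) 1 \<beta>"
    and "AE \<omega> in M. QW (X \<omega>) (W \<omega>) 0 (\<beta>, 0) = QX (X \<omega>) 0 \<beta>"
  shows "Sigma_fps M (phi_W M eW QW X W Z Y Y0 Y1 (\<beta>, 0)) (\<alpha>0, 0) = Sigma_fps M (phi_X M eX QX X Z Y Y0 Y1 \<beta>) \<alpha>0"
    and "Sigma_eps M (phi_W M eW QW X W Z Y Y0 Y1 (\<beta>, 0)) (ll_W eW X W Z) (\<alpha>0, 0)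
      \<le> Sigma_eps M (phi_X M eX QX X Z Y Y0 Y1 \<beta>) (ll_X eX X Z) \<alpha>0"
proof -
  have phi_eq: "AE \<omega> in M. phi_W M eW QW X W Z Y Y0 Y1 (\<beta>, 0) (\<alpha>0, 0) \<omega> = phi_X M eX QX X Z Y Y0 Y1 \<beta> \<alpha>0 \<omega>"
    using assms by eventually_elim (simp add: phi_W_def phi_X_def nested)
  then show "Sigma_fps M (phi_W M eW QW X W Z Y Y0 Y1 (\<beta>, 0)) (\<alpha>0, 0) = Sigma_fps M (phi_X M eX QX X Z Y Y0 Y1 \<beta>) \<alpha>0"
    unfolding Sigma_fps_def by (intro var_rv_cong_AE) auto
  obtain a where a: "Sigma_eps M (phi_X M eX QX X Z Y Y0 Y1 \<beta>) (ll_X eX X Z) \<alpha>0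
      = var_rv M (\<lambda>\<omega>. phi_X M eX QX X Z Y Y0 Y1 \<beta> \<alpha>0 \<omega> - a \<bullet> score (ll_X eX X Z) \<alpha>0 \<omega>)"
    using X.Sigma_eps_eq_var unfolding ll_X_eq by blast
  have "Sigma_eps M (phi_W M eW QW X W Z Y Y0 Y1 (\<beta>, 0)) (ll_W eW X W Z) (\<alpha>0, 0)
      \<le> var_rv M (\<lambda>\<omega>. phi_W M eW QW X W Z Y Y0 Y1 (\<beta>, 0) (\<alpha>0, 0) \<omega> - (a, 0) \<bullet> score (ll_W eW X W Z) (\<alpha>0, 0) \<omega>)"
    using phi_W_square_integrable gradient_phi_W_integrable unfolding ll_W_eq phi_W_eq
    by (intro W.Sigma_eps_le_var_score_adjusted) auto
  also have "\<dots> = Sigma_eps M (phi_X M eX QX X Z Y Y0 Y1 \<beta>) (ll_X eX X Z) \<alpha>0"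
    unfolding a using phi_eq score_W_inner_extends_score_X[of a]
    by (intro var_rv_cong_AE) (auto simp: ll_X_eq ll_W_eq)
  finally show "Sigma_eps M (phi_W M eW QW X W Z Y Y0 Y1 (\<beta>, 0)) (ll_W eW X W Z) (\<alpha>0, 0)
      \<le> Sigma_eps M (phi_X M eX QX X Z Y Y0 Y1 \<beta>) (ll_X eX X Z) \<alpha>0" .
qed

lemma Sigma_W_le_Sigma_X_if_outcome_correct:
  assumes QW_cond_exp: "AE \<omega> in M. QW (X \<omega>) (W \<omega>) (Z \<omega>) \<delta>0
      = cond_exp_given M (\<lambda>\<omega>. (X \<omega>, W \<omega>, Z \<omega>)) (MX \<Otimes>\<^sub>M MW \<Otimes>\<^sub>M borel) Y \<omega>"
  shows "Sigma_fps M (phi_W M eW QW X W Z Y Y0 Y1 \<delta>0) (\<alpha>0, 0) \<le> Sigma_fps M (phi_X M eX QX X Z Y Y0 Y1 \<beta>) \<alpha>0"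
    and "Sigma_eps M (phi_W M eW QW X W Z Y Y0 Y1 \<delta>0) (ll_W eW X W Z) (\<alpha>0, 0)
      \<le> Sigma_eps M (phi_X M eX QX X Z Y Y0 Y1 \<beta>) (ll_X eX X Z) \<alpha>0"
proof -
  have efficient: "Sigma_fps M (phi_W M eW QW X W Z Y Y0 Y1 \<delta>0) (\<alpha>0, 0)
      \<le> Sigma_eps M (phi_X M eX QX X Z Y Y0 Y1 \<beta>) (ll_X eX X Z) \<alpha>0"
  proof -
    have "outcome_regression (\<lambda>p z. QW (fst p) (snd p) z \<delta>0)"
      using QW_cond_exp by (simp add: outcome_regression_def)
    then show ?thesis
      using phi_W_square_integrable[of \<delta>0] phi_X_square_integrable[of \<beta>]
      unfolding Sigma_fps_def ll_X_eq phi_X_eq phi_W_eq W.model_phi_at_truth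
      by (intro X.var_rv_phi_true_ps_le_Sigma_eps) auto
  qed
  then show "Sigma_fps M (phi_W M eW QW X W Z Y Y0 Y1 \<delta>0) (\<alpha>0, 0) \<le> Sigma_fps M (phi_X M eX QX X Z Y Y0 Y1 \<beta>) \<alpha>0"
    using Sigma_eps_X_le_Sigma_fps_X order_trans by blast
  from efficient show "Sigma_eps M (phi_W M eW QW X W Z Y Y0 Y1 \<delta>0) (ll_W eW X W Z) (\<alpha>0, 0)
      \<le> Sigma_eps M (phi_X M eX QX X Z Y Y0 Y1 \<beta>) (ll_X eX X Z) \<alpha>0"
    using Sigma_eps_W_le_Sigma_fps_W order_trans by blast
qed

lemma W_model_dominates_X_model:
  assumes "(\<forall>\<beta>. \<forall>z\<in>{0,1}. AE \<omega> in M. QW (X \<omega>) (W \<omega>) z (\<beta>, 0) = QX (X \<omega>) z \<beta>)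
    \<or> (\<exists>\<delta>0. AE \<omega> in M. QW (X \<omega>) (W \<omega>) (Z \<omega>) \<delta>0
          = cond_exp_given M (\<lambda>\<omega>. (X \<omega>, W \<omega>, Z \<omega>)) (MX \<Otimes>\<^sub>M MW \<Otimes>\<^sub>M borel) Y \<omega>)"
  shows "\<exists>\<delta>. Sigma_fps M (phi_W M eW QW X W Z Y Y0 Y1 \<delta>) (\<alpha>0, 0) \<le> Sigma_fps M (phi_X M eX QX X Z Y Y0 Y1 \<beta>) \<alpha>0
    \<and> Sigma_eps M (phi_W M eW QW X W Z Y Y0 Y1 \<delta>) (ll_W eW X W Z) (\<alpha>0, 0)
      \<le> Sigma_eps M (phi_X M eX QX X Z Y Y0 Y1 \<beta>) (ll_X eX X Z) \<alpha>0"
  using assms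
proof
  assume "\<forall>\<beta>. \<forall>z\<in>{0,1}. AE \<omega> in M. QW (X \<omega>) (W \<omega>) z (\<beta>, 0) = QX (X \<omega>) z \<beta>"
  then have "AE \<omega> in M. QW (X \<omega>) (W \<omega>) 1 (\<beta>, 0) = QX (X \<omega>) 1 \<beta>"
    "AE \<omega> in M. QW (X \<omega>) (W \<omega>) 0 (\<beta>, 0) = QX (X \<omega>) 0 \<beta>"
    by auto
  from Sigma_W_le_Sigma_X_if_outcome_extends[OF this] show ?thesis
    by (intro exI[of _ "(\<beta>, 0)"]) simp
next
  assume "\<exists>\<delta>0. AE \<omega> in M. QW (X \<omega>) (W \<omega>) (Z \<omega>) \<delta>0
      = cond_exp_given M (\<lambda>\<omega>. (X \<omega>, W \<omega>, Z \<omega>)) (MX \<Otimes>\<^sub>M MW \<Otimes>\<^sub>M borel) Y \<omega>"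
  then show ?thesis
    using Sigma_W_le_Sigma_X_if_outcome_correct by blast
qed

end

lemma observed_outcome_integrable:
  fixes Y Y0 Y1 Z :: "'a \<Rightarrow> real"
  assumes "prob_space M" and [measurable]: "Z \<in> borel_measurable M" "Y0 \<in> borel_measurable M" "Y1 \<in> borel_measurable M"
    and Z_binary: "\<forall>\<omega>\<in>space M. Z \<omega> = 0 \<or> Z \<omega> = 1"
    and Y_def: "\<forall>\<omega>\<in>space M. Y \<omega> = Z \<omega> * Y1 \<omega> + (1 - Z \<omega>) * Y0 \<omega>"
    and "integrable M (\<lambda>\<omega>. (Y0 \<omega>)\<^sup>2)" "integrable M (\<lambda>\<omega>. (Y1 \<omega>)\<^sup>2)"
  shows "Y \<in> borel_measurable M" "integrable M Y"
proof -
  interpret prob_space M by fact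
  have Y_eq: "Y \<omega> = (if Z \<omega> = 1 then Y1 \<omega> else Y0 \<omega>)" if "\<omega> \<in> space M" for \<omega>
    using Z_binary Y_def that by auto
  show "Y \<in> borel_measurable M"
    by (subst measurable_cong[OF Y_eq]) measurable
  have "integrable M Y0" "integrable M Y1"
    using assms by (auto intro: square_integrable_imp_integrable)
  then have "integrable M (\<lambda>\<omega>. \<bar>Y0 \<omega>\<bar> + \<bar>Y1 \<omega>\<bar>)"
    by auto
  then show "integrable M Y"
    by (rule Bochner_Integration.integrable_bound) (use Y_eq \<open>Y \<in> borel_measurable M\<close> in auto)
qed

theorem theorem4:
  fixes M :: "'a measure"
    and X :: "'a \<Rightarrow> 'x" and MX :: "'x measure"
    and W :: "'a \<Rightarrow> 'w" and MW :: "'w measure"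
    and Y Y0 Y1 Z :: "'a \<Rightarrow> real"
    and eX :: "'x \<Rightarrow> 'p::euclidean_space \<Rightarrow> real"
    and eW :: "'x \<Rightarrow> 'w \<Rightarrow> 'p \<Rightarrow> 'q::euclidean_space \<Rightarrow> real"
    and QX :: "'x \<Rightarrow> real \<Rightarrow> 'b::euclidean_space \<Rightarrow> real"
    and QW :: "'x \<Rightarrow> 'w \<Rightarrow> real \<Rightarrow> 'b \<times> 'c::euclidean_space \<Rightarrow> real"
    and \<alpha>0 :: 'p
    and \<beta>fps \<beta>eps :: 'b
    and \<delta>fps \<delta>eps :: "'b \<times> 'c"
  assumes M: "prob_space M"
    and meas_X: "X \<in> measurable M MX"
    and meas_W: "W \<in> measurable M MW"
    and meas_Y0: "Y0 \<in> borel_measurable M"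
    and meas_Y1: "Y1 \<in> borel_measurable M"
    and meas_Z: "Z \<in> borel_measurable M"
    and Z_binary: "\<forall>\<omega>\<in>space M. Z \<omega> = 0 \<or> Z \<omega> = 1"
    and Y_def: "\<forall>\<omega>\<in>space M. Y \<omega> = Z \<omega> * Y1 \<omega> + (1 - Z \<omega>) * Y0 \<omega>"
    \<comment> \<open>Assumption 1\<close>
    and A1_ci: "cond_indep M Z borel (\<lambda>\<omega>. (Y0 \<omega>, Y1 \<omega>)) borel X MX"
    and A1_pos: "AE \<omega> in M. 0 < prop_score M X MX Z \<omega> \<and> prop_score M X MX Z \<omega> < 1"
    \<comment> \<open>Assumption 2\<close>
    and A2: "cond_indep M Z borel (\<lambda>\<omega>. (W \<omega>, Y0 \<omega>, Y1 \<omega>)) (MW \<Otimes>\<^sub>M borel) X MX"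
    \<comment> \<open>nested propensity models, both correctly specified (gamma_0 = 0)\<close>
    and nested: "\<forall>x w a. eW x w a 0 = eX x a"
    and correct_X: "AE \<omega> in M. eX (X \<omega>) \<alpha>0 = prop_score M X MX Z \<omega>"
    \<comment> \<open>Assumption 3\<close>
    and A3: "(\<forall>\<beta>. \<forall>z\<in>{0,1}. AE \<omega> in M. QW (X \<omega>) (W \<omega>) z (\<beta>, 0) = QX (X \<omega>) z \<beta>)
             \<or> (\<exists>\<delta>0. AE \<omega> in M. QW (X \<omega>) (W \<omega>) (Z \<omega>) \<delta>0
                    = cond_exp_given M (\<lambda>\<omega>. (X \<omega>, W \<omega>, Z \<omega>)) (MX \<Otimes>\<^sub>M MW \<Otimes>\<^sub>M borel) Y \<omega>)"
    \<comment> \<open>regularity: measurability of working models\<close>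
    and meas_eX: "\<forall>a. (\<lambda>x. eX x a) \<in> borel_measurable MX"
    and meas_eW: "\<forall>a g. (\<lambda>(x, w). eW x w a g) \<in> borel_measurable (MX \<Otimes>\<^sub>M MW)"
    and meas_QX: "\<forall>z \<beta>. (\<lambda>x. QX x z \<beta>) \<in> borel_measurable MX"
    and meas_QW: "\<forall>z \<delta>. (\<lambda>(x, w). QW x w z \<delta>) \<in> borel_measurable (MX \<Otimes>\<^sub>M MW)"
    \<comment> \<open>regularity: differentiability of the propensity models at the truth\<close>
    and diff_eX: "\<forall>x\<in>space MX. eX x differentiable (at \<alpha>0)"
    and diff_eW: "\<forall>x\<in>space MX. \<forall>w\<in>space MW.
                    (\<lambda>\<theta>. eW x w (fst \<theta>) (snd \<theta>)) differentiable (at (\<alpha>0, 0))"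
    \<comment> \<open>regularity: moments exist, information matrices are invertible\<close>
    and int_Y0: "integrable M (\<lambda>\<omega>. (Y0 \<omega>)\<^sup>2)"
    and int_Y1: "integrable M (\<lambda>\<omega>. (Y1 \<omega>)\<^sup>2)"
    and int_phiX: "\<forall>\<beta>. integrable M (\<lambda>\<omega>. (phi_X M eX QX X Z Y Y0 Y1 \<beta> \<alpha>0 \<omega>)\<^sup>2)"
    and int_phiW: "\<forall>\<delta>. integrable M (\<lambda>\<omega>. (phi_W M eW QW X W Z Y Y0 Y1 \<delta> (\<alpha>0, 0) \<omega>)\<^sup>2)"
    and int_dphiX: "\<forall>\<beta>. integrable M (\<lambda>\<omega>. gradient (\<lambda>a. phi_X M eX QX X Z Y Y0 Y1 \<beta> a \<omega>) \<alpha>0)"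
    and int_dphiW: "\<forall>\<delta>. integrable M
                      (\<lambda>\<omega>. gradient (\<lambda>\<theta>. phi_W M eW QW X W Z Y Y0 Y1 \<delta> \<theta> \<omega>) (\<alpha>0, 0))"
    and int_SX: "integrable M (\<lambda>\<omega>. (norm (score (ll_X eX X Z) \<alpha>0 \<omega>))\<^sup>2)"
    and int_SW: "integrable M (\<lambda>\<omega>. (norm (score (ll_W eW X W Z) (\<alpha>0, 0) \<omega>))\<^sup>2)"
    and inv_HX: "bij (fisher_info M (ll_X eX X Z) \<alpha>0)"
    and inv_HW: "bij (fisher_info M (ll_W eW X W Z) (\<alpha>0, 0))"
    \<comment> \<open>the four minimizers\<close>
    and min_Xfps: "\<forall>\<beta>. Sigma_fps M (phi_X M eX QX X Z Y Y0 Y1 \<beta>fps) \<alpha>0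
                      \<le> Sigma_fps M (phi_X M eX QX X Z Y Y0 Y1 \<beta>) \<alpha>0"
    and min_Xeps: "\<forall>\<beta>. Sigma_eps M (phi_X M eX QX X Z Y Y0 Y1 \<beta>eps) (ll_X eX X Z) \<alpha>0
                      \<le> Sigma_eps M (phi_X M eX QX X Z Y Y0 Y1 \<beta>) (ll_X eX X Z) \<alpha>0"
    and min_Wfps: "\<forall>\<delta>. Sigma_fps M (phi_W M eW QW X W Z Y Y0 Y1 \<delta>fps) (\<alpha>0, 0)
                      \<le> Sigma_fps M (phi_W M eW QW X W Z Y Y0 Y1 \<delta>) (\<alpha>0, 0)"
    and min_Weps: "\<forall>\<delta>. Sigma_eps M (phi_W M eW QW X W Z Y Y0 Y1 \<delta>eps) (ll_W eW X W Z) (\<alpha>0, 0)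
                      \<le> Sigma_eps M (phi_W M eW QW X W Z Y Y0 Y1 \<delta>) (ll_W eW X W Z) (\<alpha>0, 0)"
  shows "Sigma_eps M (phi_W M eW QW X W Z Y Y0 Y1 \<delta>eps) (ll_W eW X W Z) (\<alpha>0, 0)
           \<le> Sigma_eps M (phi_X M eX QX X Z Y Y0 Y1 \<beta>eps) (ll_X eX X Z) \<alpha>0
       \<and> Sigma_eps M (phi_X M eX QX X Z Y Y0 Y1 \<beta>eps) (ll_X eX X Z) \<alpha>0
           \<le> Sigma_fps M (phi_X M eX QX X Z Y Y0 Y1 \<beta>fps) \<alpha>0
       \<and> Sigma_eps M (phi_W M eW QW X W Z Y Y0 Y1 \<delta>eps) (ll_W eW X W Z) (\<alpha>0, 0)
           \<le> Sigma_fps M (phi_W M eW QW X W Z Y Y0 Y1 \<delta>fps) (\<alpha>0, 0)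
       \<and> Sigma_fps M (phi_W M eW QW X W Z Y Y0 Y1 \<delta>fps) (\<alpha>0, 0)
           \<le> Sigma_fps M (phi_X M eX QX X Z Y Y0 Y1 \<beta>fps) \<alpha>0"
proof -
  have Y: "Y \<in> borel_measurable M" "integrable M Y"
    using observed_outcome_integrable[OF M meas_Z meas_Y0 meas_Y1 Z_binary Y_def int_Y0 int_Y1] by auto
  have e_bounds: "AE \<omega> in M. 0 < eX (X \<omega>) \<alpha>0 \<and> eX (X \<omega>) \<alpha>0 < 1"
    using correct_X A1_pos by eventually_elim simp
  interpret propensity_setting M X MX W MW Z "\<lambda>x. eX x \<alpha>0" Y
    using M meas_X meas_W meas_Z Z_binary cond_indep_fst_borel[OF A2] meas_eX correct_X e_bounds Y
    by (intro propensity_setting.intro propensity_setting_axioms.intro) auto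
  interpret nested_dr_models M X MX W MW Z "\<lambda>x. eX x \<alpha>0" Y eX eW \<alpha>0 QX QW Y0 Y1
  proof (intro nested_dr_models.intro propensity_model.intro propensity_model_axioms.intro
      nested_dr_models_axioms.intro propensity_setting_axioms)
    show "(\<lambda>p. eW (fst p) (snd p) (fst \<theta>) (snd \<theta>)) \<in> borel_measurable (MX \<Otimes>\<^sub>M MW)" for \<theta>
      using meas_eW by (simp add: split_beta')
    show "(\<lambda>p. eX (fst p) \<theta>) \<in> borel_measurable (MX \<Otimes>\<^sub>M MW)" for \<theta>
      using meas_eX by (intro measurable_compose[OF measurable_fst]) auto
  qed (use nested diff_eX diff_eW meas_eX meas_QX meas_QW int_phiX int_phiW int_dphiX int_dphiW
      int_SX int_SW inv_HX inv_HW in \<open>auto simp: space_pair_measure ll_X_eq[symmetric] ll_W_eq[symmetric]\<close>)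
  note dominated = W_model_dominates_X_model[OF A3]
  show ?thesis
    using dominated[of \<beta>eps] dominated[of \<beta>fps] min_Xfps min_Xeps min_Wfps min_Weps
      Sigma_eps_X_le_Sigma_fps_X[of \<beta>fps] Sigma_eps_W_le_Sigma_fps_W[of \<delta>fps]
    by (meson order_trans)
qed

end
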